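(* Let $A$ be a Banach algebra and $\phi\in\Delta(A)$. If $A$ is $\phi$-biflat, then $A$ is approximately left $\phi$-biprojective.
   Context: $\Delta(A)$ is the set of characters of $A$; $A\otimes_pA$ is the projective tensor product with $a\cdot(b\otimes c)=ab\otimes c$, $(b\otimes c)\cdot a=b\otimes ca$, $\pi_A(a\otimes b)=ab$. For $F\in A^{**}$ put $\tilde\phi(F)=F(\phi)$. $A$ is $\phi$-biflat if there is a bounded $A$-bimodule morphism $\rho:A\to(A\otimes_pA)^{**}$ with $\tilde\phi(\pi_A^{**}(\rho(a)))=\phi(a)$ for all $a\in A$. $A$ is approximately left $\phi$-biprojective if there is a net $(\rho_\alpha)$ of bounded linear maps $A\to A\otimes_pA$ such that for all $a,x\in A$: $\|a\cdot\rho_\alpha(x)-\rho_\alpha(ax)\|\to0$, $\|\rho_\alpha(xa)-\phi(a)\rho_\alpha(x)\|\to0$, and $\phi(\pi_A(\rho_\alpha(x)))-\phi(x)\to0$. *)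

theory Defs
  imports "HOL-Analysis.Analysis"
begin

text \<open>A complex Banach algebra: a (possibly non-unital) real Banach algebra type 'a
  together with a complex scalar multiplication cs extending the real one, compatible
  with the norm and the multiplication.\<close>
definition cplx_banach_alg :: "(complex \<Rightarrow> 'a::{real_normed_algebra,banach} \<Rightarrow> 'a) \<Rightarrow> bool" where
  "cplx_banach_alg cs \<longleftrightarrow>
     (\<forall>r x. cs (complex_of_real r) x = r *\<^sub>R x) \<and>
     (\<forall>c d x. cs c (cs d x) = cs (c * d) x) \<and>
     (\<forall>c x y. cs c (x + y) = cs c x + cs c y) \<and>
     (\<forall>c d x. cs (c + d) x = cs c x + cs d x) \<and>
     (\<forall>c x. norm (cs c x) = cmod c * norm x) \<and>
     (\<forall>c x y. cs c (x * y) = cs c x * y) \<and>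
     (\<forall>c x y. cs c (x * y) = x * cs c y)"

definition clinear_fun :: "(complex \<Rightarrow> 'a::real_normed_algebra \<Rightarrow> 'a) \<Rightarrow> ('a \<Rightarrow> complex) \<Rightarrow> bool" where
  "clinear_fun cs f \<longleftrightarrow> (\<forall>x y. f (x + y) = f x + f y) \<and> (\<forall>c x. f (cs c x) = c * f x)"

definition character :: "(complex \<Rightarrow> 'a::real_normed_algebra \<Rightarrow> 'a) \<Rightarrow> ('a \<Rightarrow> complex) \<Rightarrow> bool" where
  "character cs \<phi> \<longleftrightarrow> clinear_fun cs \<phi> \<and> (\<forall>x y. \<phi> (x * y) = \<phi> x * \<phi> y) \<and> (\<exists>x. \<phi> x \<noteq> 0)"

definition bbil_bound :: "('a::real_normed_algebra \<Rightarrow> 'a \<Rightarrow> complex) \<Rightarrow> real \<Rightarrow> bool" where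
  "bbil_bound T M \<longleftrightarrow> (\<forall>x y. cmod (T x y) \<le> M * norm x * norm y)"

text \<open>Bounded complex-bilinear forms on A x A; this is the dual (A \<otimes>_p A)* .\<close>
definition bbil :: "(complex \<Rightarrow> 'a::real_normed_algebra \<Rightarrow> 'a) \<Rightarrow> ('a \<Rightarrow> 'a \<Rightarrow> complex) set" where
  "bbil cs = {T. (\<forall>x. clinear_fun cs (\<lambda>y. T x y)) \<and> (\<forall>y. clinear_fun cs (\<lambda>x. T x y))
                 \<and> (\<exists>M. bbil_bound T M)}"

text \<open>Elements of the bidual (A \<otimes>_p A)** : bounded linear functionals on bbil cs
  (only their values on bbil cs are relevant).\<close>
definition bidual_elem :: "(complex \<Rightarrow> 'a::real_normed_algebra \<Rightarrow> 'a) \<Rightarrow> (('a \<Rightarrow> 'a \<Rightarrow> complex) \<Rightarrow> complex) \<Rightarrow> bool" where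
  "bidual_elem cs F \<longleftrightarrow>
     (\<forall>S\<in>bbil cs. \<forall>T\<in>bbil cs. F (\<lambda>x y. S x y + T x y) = F S + F T) \<and>
     (\<forall>c. \<forall>T\<in>bbil cs. F (\<lambda>x y. c * T x y) = c * F T) \<and>
     (\<exists>C. \<forall>T\<in>bbil cs. \<forall>M\<ge>0. bbil_bound T M \<longrightarrow> cmod (F T) \<le> C * M)"

text \<open>Module actions on (A \<otimes>_p A) and its bidual, written via the pairing with
  bilinear forms: a\<cdot>(b\<otimes>c) = ab\<otimes>c and (b\<otimes>c)\<cdot>a = b\<otimes>ca, dualised twice.\<close>
definition lact :: "'a::real_normed_algebra \<Rightarrow> (('a \<Rightarrow> 'a \<Rightarrow> complex) \<Rightarrow> complex) \<Rightarrow> (('a \<Rightarrow> 'a \<Rightarrow> complex) \<Rightarrow> complex)" where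
  "lact a F = (\<lambda>T. F (\<lambda>x y. T (a * x) y))"

definition ract :: "(('a::real_normed_algebra \<Rightarrow> 'a \<Rightarrow> complex) \<Rightarrow> complex) \<Rightarrow> 'a \<Rightarrow> (('a \<Rightarrow> 'a \<Rightarrow> complex) \<Rightarrow> complex)" where
  "ract F a = (\<lambda>T. F (\<lambda>x y. T x (y * a)))"

text \<open>phi-biflatness. Note tilde-phi(pi_A**(rho a)) = (rho a)(pi_A* phi) and
  pi_A* phi is the bilinear form (x,y) \<mapsto> phi(xy).\<close>
definition phi_biflat :: "(complex \<Rightarrow> 'a::{real_normed_algebra,banach} \<Rightarrow> 'a) \<Rightarrow> ('a \<Rightarrow> complex) \<Rightarrow> bool" where
  "phi_biflat cs \<phi> \<longleftrightarrow> (\<exists>\<rho> :: 'a \<Rightarrow> (('a \<Rightarrow> 'a \<Rightarrow> complex) \<Rightarrow> complex).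
     (\<forall>a. bidual_elem cs (\<rho> a)) \<and>
     (\<forall>a b. \<forall>T\<in>bbil cs. \<rho> (a + b) T = \<rho> a T + \<rho> b T) \<and>
     (\<forall>c a. \<forall>T\<in>bbil cs. \<rho> (cs c a) T = c * \<rho> a T) \<and>
     (\<exists>C. \<forall>a. \<forall>T\<in>bbil cs. \<forall>M\<ge>0. bbil_bound T M \<longrightarrow> cmod (\<rho> a T) \<le> C * norm a * M) \<and>
     (\<forall>a b. \<forall>T\<in>bbil cs. \<rho> (a * b) T = lact a (\<rho> b) T) \<and>
     (\<forall>a b. \<forall>T\<in>bbil cs. \<rho> (a * b) T = ract (\<rho> a) b T) \<and>
     (\<forall>a. \<rho> a (\<lambda>x y. \<phi> (x * y)) = \<phi> a))"

text \<open>The projective tensor product A \<otimes>_p A: elements are sums \<Sum> a_n \<otimes> b_n with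
  \<Sum> \<parallel>a_n\<parallel>\<parallel>b_n\<parallel> < \<infinity>, identified by their action on bounded bilinear forms.\<close>
definition ptensor :: "(complex \<Rightarrow> 'a::real_normed_algebra \<Rightarrow> 'a) \<Rightarrow> (('a \<Rightarrow> 'a \<Rightarrow> complex) \<Rightarrow> complex) set" where
  "ptensor cs = {F. \<exists>a b :: nat \<Rightarrow> 'a. summable (\<lambda>n. norm (a n) * norm (b n)) \<and>
                    (\<forall>T\<in>bbil cs. F T = (\<Sum>n. T (a n) (b n)))}"

definition ptnorm :: "(complex \<Rightarrow> 'a::real_normed_algebra \<Rightarrow> 'a) \<Rightarrow> (('a \<Rightarrow> 'a \<Rightarrow> complex) \<Rightarrow> complex) \<Rightarrow> real" where
  "ptnorm cs F = Inf {(\<Sum>n. norm (a n) * norm (b n)) | a b :: nat \<Rightarrow> 'a.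
                      summable (\<lambda>n. norm (a n) * norm (b n)) \<and>
                      (\<forall>T\<in>bbil cs. F T = (\<Sum>n. T (a n) (b n)))}"

definition approx_left_phi_biproj_net ::
  "(complex \<Rightarrow> 'a::{real_normed_algebra,banach} \<Rightarrow> 'a) \<Rightarrow> ('a \<Rightarrow> complex) \<Rightarrow> 'i filter
   \<Rightarrow> ('i \<Rightarrow> 'a \<Rightarrow> (('a \<Rightarrow> 'a \<Rightarrow> complex) \<Rightarrow> complex)) \<Rightarrow> bool" where
  "approx_left_phi_biproj_net cs \<phi> F \<rho> \<longleftrightarrow> F \<noteq> bot \<and>
     (\<forall>i. (\<forall>x. \<rho> i x \<in> ptensor cs) \<and>
          (\<forall>x y. \<forall>T\<in>bbil cs. \<rho> i (x + y) T = \<rho> i x T + \<rho> i y T) \<and>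
          (\<forall>c x. \<forall>T\<in>bbil cs. \<rho> i (cs c x) T = c * \<rho> i x T) \<and>
          (\<exists>C. \<forall>x. ptnorm cs (\<rho> i x) \<le> C * norm x)) \<and>
     (\<forall>a x. ((\<lambda>i. ptnorm cs (\<lambda>T. lact a (\<rho> i x) T - \<rho> i (a * x) T)) \<longlongrightarrow> 0) F) \<and>
     (\<forall>a x. ((\<lambda>i. ptnorm cs (\<lambda>T. \<rho> i (x * a) T - \<phi> a * \<rho> i x T)) \<longlongrightarrow> 0) F) \<and>
     (\<forall>x. ((\<lambda>i. \<rho> i x (\<lambda>u v. \<phi> (u * v)) - \<phi> x) \<longlongrightarrow> 0) F)"

definition approx_left_phi_biprojective ::
  "(complex \<Rightarrow> 'a::{real_normed_algebra,banach} \<Rightarrow> 'a) \<Rightarrow> ('a \<Rightarrow> complex) \<Rightarrow> bool" where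
  "approx_left_phi_biprojective cs \<phi> \<longleftrightarrow>
     (\<exists>(F :: ('a set \<times> real) filter) \<rho>. approx_left_phi_biproj_net cs \<phi> F \<rho>)"

end

theory Submission
  imports Defs "HOL-Library.Function_Algebras"
begin

text \<open>Fix \<open>a0\<close> with \<open>\<phi> a0 = 1\<close>. It suffices that for every finite \<open>S \<subseteq> A\<close> and \<open>\<epsilon> > 0\<close> some
  finite-rank operator \<open>G\<close> on \<open>A\<close> makes \<open>\<parallel>a G x - G (a x)\<parallel>\<close>, \<open>\<parallel>G (x a) - \<phi> a G x\<parallel>\<close> and
  \<open>\<bar>\<phi> (G x) - \<phi> x\<bar>\<close> small for \<open>a, x \<in> S\<close>: the maps \<open>x \<mapsto> G x \<otimes> a0\<close>, indexed by \<open>(S, \<epsilon>)\<close>,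
  then form the required net. If no such \<open>G\<close> exists, Hahn--Banach yields a real functional \<open>l\<close>
  that vanishes on the defect vectors of all finite-rank operators but is positive on the target
  vector. Its components define an element of the algebraic tensor product of \<open>A\<close> with its dual
  that is annihilated by every \<open>\<psi> \<otimes> e\<close>, hence is zero. Pairing it with \<open>\<rho>\<close> through \<open>F \<otimes> \<phi>\<close>,
  the bimodule identities of \<open>\<rho>\<close> and \<open>\<rho> a (\<phi> \<circ> \<pi>) = \<phi> a\<close> collapse the result to a number whose
  real part is the value of \<open>l\<close> on the target, a contradiction.\<close>

section \<open>Hahn--Banach for real vector spaces\<close>

text \<open>Partial linear functionals dominated by \<open>p\<close> are handled through their graphs, so that
  the upper bound of a chain in Zorn's lemma is simply its union.\<close>

definition dominated_linear_graph :: "('v::real_vector \<Rightarrow> real) \<Rightarrow> ('v \<times> real) set \<Rightarrow> bool" where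
  "dominated_linear_graph p G \<longleftrightarrow>
     (\<forall>x a b. (x, a) \<in> G \<longrightarrow> (x, b) \<in> G \<longrightarrow> a = b) \<and> (0, 0) \<in> G \<and>
     (\<forall>x a y b. (x, a) \<in> G \<longrightarrow> (y, b) \<in> G \<longrightarrow> (x + y, a + b) \<in> G) \<and>
     (\<forall>x a c. (x, a) \<in> G \<longrightarrow> (c *\<^sub>R x, c * a) \<in> G) \<and>
     (\<forall>x a. (x, a) \<in> G \<longrightarrow> a \<le> p x)"

lemma dominated_linear_graphI:
  assumes "\<And>x a b. (x, a) \<in> G \<Longrightarrow> (x, b) \<in> G \<Longrightarrow> a = b" and "(0, 0) \<in> G"
    and "\<And>x a y b. (x, a) \<in> G \<Longrightarrow> (y, b) \<in> G \<Longrightarrow> (x + y, a + b) \<in> G"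
    and "\<And>x a c. (x, a) \<in> G \<Longrightarrow> (c *\<^sub>R x, c * a) \<in> G"
    and "\<And>x a. (x, a) \<in> G \<Longrightarrow> a \<le> p x"
  shows "dominated_linear_graph p G"
  unfolding dominated_linear_graph_def using assms by blast

lemma dominated_linear_graphD:
  assumes "dominated_linear_graph p G"
  shows dominated_linear_graph_unique: "(x, a) \<in> G \<Longrightarrow> (x, b) \<in> G \<Longrightarrow> a = b"
    and dominated_linear_graph_zero: "(0, 0) \<in> G"
    and dominated_linear_graph_add: "(x, a) \<in> G \<Longrightarrow> (y, b) \<in> G \<Longrightarrow> (x + y, a + b) \<in> G"
    and dominated_linear_graph_scaleR: "(x, a) \<in> G \<Longrightarrow> (c *\<^sub>R x, c * a) \<in> G"
    and dominated_linear_graph_le: "(x, a) \<in> G \<Longrightarrow> a \<le> p x"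
  using assms unfolding dominated_linear_graph_def by blast+

lemma dominated_linear_graph_Union_chain:
  assumes C: "C \<in> chains {G. dominated_linear_graph p G \<and> G0 \<subseteq> G}" and "C \<noteq> {}"
  shows "dominated_linear_graph p (\<Union>C)"
proof -
  have graph: "dominated_linear_graph p X" if "X \<in> C" for X
    using C that unfolding chains_def by blast
  have common: "\<exists>Z\<in>C. X \<subseteq> Z \<and> Y \<subseteq> Z" if "X \<in> C" "Y \<in> C" for X Y
  proof -
    have "X \<subseteq> Y \<or> Y \<subseteq> X" using C that unfolding chains_def chain_subset_def by blast
    then show ?thesis using that by blast
  qed
  show ?thesis
  proof (rule dominated_linear_graphI)
    fix x a b assume "(x, a) \<in> \<Union>C" "(x, b) \<in> \<Union>C"
    then obtain X Y where "X \<in> C" "Y \<in> C" "(x, a) \<in> X" "(x, b) \<in> Y" by blast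
    with common obtain Z where "Z \<in> C" "(x, a) \<in> Z" "(x, b) \<in> Z" by blast
    then show "a = b" using dominated_linear_graph_unique[OF graph] by blast
  next
    from \<open>C \<noteq> {}\<close> obtain X where "X \<in> C" by blast
    then show "(0, 0) \<in> \<Union>C" using dominated_linear_graph_zero[OF graph] by blast
  next
    fix x a y b assume "(x, a) \<in> \<Union>C" "(y, b) \<in> \<Union>C"
    then obtain X Y where "X \<in> C" "Y \<in> C" "(x, a) \<in> X" "(y, b) \<in> Y" by blast
    with common obtain Z where Z: "Z \<in> C" "(x, a) \<in> Z" "(y, b) \<in> Z" by blast
    then have "(x + y, a + b) \<in> Z" by (intro dominated_linear_graph_add[OF graph])
    with Z show "(x + y, a + b) \<in> \<Union>C" by blast
  next
    fix x a c assume "(x, a) \<in> \<Union>C"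
    then obtain X where X: "X \<in> C" "(x, a) \<in> X" by blast
    then have "(c *\<^sub>R x, c * a) \<in> X" by (intro dominated_linear_graph_scaleR[OF graph])
    with X show "(c *\<^sub>R x, c * a) \<in> \<Union>C" by blast
  next
    fix x a assume "(x, a) \<in> \<Union>C"
    then obtain X where "X \<in> C" "(x, a) \<in> X" by blast
    then show "a \<le> p x" by (intro dominated_linear_graph_le[OF graph])
  qed
qed

lemma dominated_linear_graph_decomp_unique:
  assumes G: "dominated_linear_graph p G" and x0: "\<forall>a. (x0, a) \<notin> G"
    and "(y, a) \<in> G" "(y', a') \<in> G" and eq: "y + t *\<^sub>R x0 = y' + t' *\<^sub>R x0"
  shows "t = t' \<and> y = y' \<and> a = a'"
proof (cases "t = t'")
  case True
  then show ?thesis using eq dominated_linear_graph_unique[OF G] assms(3,4) by auto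
next
  case False
  have "(y' + (-1) *\<^sub>R y, a' + (-1) * a) \<in> G"
    using assms(3,4) by (intro dominated_linear_graph_add[OF G] dominated_linear_graph_scaleR[OF G])
  then have "((1 / (t - t')) *\<^sub>R (y' + (-1) *\<^sub>R y), (1 / (t - t')) * (a' + (-1) * a)) \<in> G"
    by (rule dominated_linear_graph_scaleR[OF G])
  moreover have "y' + (-1) *\<^sub>R y = (t - t') *\<^sub>R x0"
    using eq by (simp add: scaleR_diff_left algebra_simps)
  ultimately show ?thesis using False x0 by auto
qed

text \<open>A value for the new direction \<open>x0\<close> exists since \<open>a - p (y - x0) \<le> p (y' + x0) - a'\<close>
  for any two points \<open>(y, a)\<close>, \<open>(y', a')\<close> of the graph.\<close>

lemma dominated_linear_graph_extension_value:
  fixes p :: "'v::real_vector \<Rightarrow> real"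
  assumes subadd: "\<And>x y. p (x + y) \<le> p x + p y" and G: "dominated_linear_graph p G"
  obtains c where "\<And>y a. (y, a) \<in> G \<Longrightarrow> a - p (y - x0) \<le> c"
    and "\<And>y a. (y, a) \<in> G \<Longrightarrow> c \<le> p (y + x0) - a"
proof
  define S where "S = {a - p (y - x0) | y a. (y, a) \<in> G}"
  have key: "a - p (y - x0) \<le> p (y' + x0) - a'" if "(y, a) \<in> G" "(y', a') \<in> G" for y a y' a'
  proof -
    have "a + a' \<le> p ((y - x0) + (y' + x0))"
      using dominated_linear_graph_le[OF G dominated_linear_graph_add[OF G that]] by simp
    then show ?thesis using subadd[of "y - x0" "y' + x0"] by linarith
  qed
  have zero: "(0, 0) \<in> G" by (rule dominated_linear_graph_zero[OF G])
  have "bdd_above S"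
    using key[OF _ zero] by (intro bdd_aboveI[of _ "p x0"]) (auto simp: S_def)
  then show "a - p (y - x0) \<le> Sup S" if "(y, a) \<in> G" for y a
    using that by (intro cSup_upper) (auto simp: S_def)
  show "Sup S \<le> p (y + x0) - a" if "(y, a) \<in> G" for y a
    using zero that by (intro cSup_least) (auto simp: S_def intro: key)
qed

lemma dominated_linear_graph_extension_le:
  fixes p :: "'v::real_vector \<Rightarrow> real"
  assumes pos_hom: "\<And>c x. 0 \<le> c \<Longrightarrow> p (c *\<^sub>R x) = c * p x"
    and G: "dominated_linear_graph p G"
    and below: "\<And>y a. (y, a) \<in> G \<Longrightarrow> a - p (y - x0) \<le> c"
    and above: "\<And>y a. (y, a) \<in> G \<Longrightarrow> c \<le> p (y + x0) - a"
    and "(y, a) \<in> G"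
  shows "a + t * c \<le> p (y + t *\<^sub>R x0)"
proof -
  have scaled: "((1 / s) *\<^sub>R y, (1 / s) * a) \<in> G" for s
    by (rule dominated_linear_graph_scaleR[OF G \<open>(y, a) \<in> G\<close>])
  consider "t = 0" | "t > 0" | "t < 0" by linarith
  then show ?thesis
  proof cases
    case 1
    then show ?thesis using dominated_linear_graph_le[OF G \<open>(y, a) \<in> G\<close>] by simp
  next
    case 2
    have "t * c \<le> t * p ((1 / t) *\<^sub>R y + x0) - a"
      using above[OF scaled[of t]] 2 by (simp add: field_simps)
    also have "t * p ((1 / t) *\<^sub>R y + x0) = p (y + t *\<^sub>R x0)"
      using 2 pos_hom[of t "(1 / t) *\<^sub>R y + x0"] by (simp add: scaleR_add_right)
    finally show ?thesis by linarith
  next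
    case 3
    have "a - (-t) * p ((1 / (-t)) *\<^sub>R y - x0) \<le> - t * c"
      using below[OF scaled[of "-t"]] 3 by (simp add: field_simps)
    also have "(-t) * p ((1 / (-t)) *\<^sub>R y - x0) = p (y + t *\<^sub>R x0)"
      using 3 pos_hom[of "-t" "(1 / (-t)) *\<^sub>R y - x0"] by (simp add: scaleR_diff_right)
    finally show ?thesis by linarith
  qed
qed

lemma dominated_linear_graph_extension:
  fixes p :: "'v::real_vector \<Rightarrow> real"
  assumes pos_hom: "\<And>c x. 0 \<le> c \<Longrightarrow> p (c *\<^sub>R x) = c * p x"
    and G: "dominated_linear_graph p G" and x0: "\<forall>a. (x0, a) \<notin> G"
    and below: "\<And>y a. (y, a) \<in> G \<Longrightarrow> a - p (y - x0) \<le> c"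
    and above: "\<And>y a. (y, a) \<in> G \<Longrightarrow> c \<le> p (y + x0) - a"
  shows "dominated_linear_graph p {(y + t *\<^sub>R x0, a + t * c) | y a t. (y, a) \<in> G}"
    (is "dominated_linear_graph p ?G'")
proof (rule dominated_linear_graphI)
  have G'I: "(y + t *\<^sub>R x0, a + t * c) \<in> ?G'" if "(y, a) \<in> G" for y a t
    using that by blast
  fix x a b
  assume "(x, a) \<in> ?G'"
  then obtain y1 a1 t1 where 1: "(y1, a1) \<in> G" "x = y1 + t1 *\<^sub>R x0" "a = a1 + t1 * c" by blast
  then show "a \<le> p x"
    using dominated_linear_graph_extension_le[OF pos_hom G below above] by simp
  show "(d *\<^sub>R x, d * a) \<in> ?G'" for d
    using G'I[OF dominated_linear_graph_scaleR[OF G 1(1), of d], where t = "d * t1"] 1 by (simp add: algebra_simps)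
  {
    fix y assume "(y, b) \<in> ?G'"
    then obtain y2 a2 t2 where 2: "(y2, a2) \<in> G" "y = y2 + t2 *\<^sub>R x0" "b = a2 + t2 * c" by blast
    show "(x + y, a + b) \<in> ?G'"
      using G'I[OF dominated_linear_graph_add[OF G 1(1) 2(1)], where t = "t1 + t2"] 1 2
      by (simp add: algebra_simps)
  }
  assume "(x, b) \<in> ?G'"
  then obtain y2 a2 t2 where 2: "(y2, a2) \<in> G" "x = y2 + t2 *\<^sub>R x0" "b = a2 + t2 * c" by blast
  have "t1 = t2 \<and> y1 = y2 \<and> a1 = a2"
    using 1(2) 2(2) by (intro dominated_linear_graph_decomp_unique[OF G x0 1(1) 2(1)]) simp
  with 1 2 show "a = b" by simp
next
  show "(0, 0) \<in> ?G'" using dominated_linear_graph_zero[OF G] by force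
qed

lemma dominated_linear_graph_extend:
  fixes p :: "'v::real_vector \<Rightarrow> real"
  assumes subadd: "\<And>x y. p (x + y) \<le> p x + p y"
    and pos_hom: "\<And>c x. 0 \<le> c \<Longrightarrow> p (c *\<^sub>R x) = c * p x"
    and G: "dominated_linear_graph p G" and x0: "\<forall>a. (x0, a) \<notin> G"
  obtains G' where "dominated_linear_graph p G'" "G \<subset> G'"
proof -
  obtain c where below: "\<And>y a. (y, a) \<in> G \<Longrightarrow> a - p (y - x0) \<le> c"
    and above: "\<And>y a. (y, a) \<in> G \<Longrightarrow> c \<le> p (y + x0) - a"
    using dominated_linear_graph_extension_value[OF subadd G] by blast
  let ?G' = "{(y + t *\<^sub>R x0, a + t * c) | y a t. (y, a) \<in> G}"
  have "(y, a) \<in> ?G'" if "(y, a) \<in> G" for y a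
    using that by (intro CollectI exI[of _ y] exI[of _ a] exI[of _ 0]) simp
  then have "G \<subseteq> ?G'" by auto
  moreover have "(x0, c) \<in> ?G'"
    using dominated_linear_graph_zero[OF G] by (intro CollectI exI[of _ 0] exI[of _ 0] exI[of _ 1]) simp
  ultimately show ?thesis
    using that dominated_linear_graph_extension[OF pos_hom G x0 below above] x0 by blast
qed

lemma total_dominated_linear_graph:
  fixes p :: "'v::real_vector \<Rightarrow> real"
  assumes subadd: "\<And>x y. p (x + y) \<le> p x + p y"
    and pos_hom: "\<And>c x. 0 \<le> c \<Longrightarrow> p (c *\<^sub>R x) = c * p x"
    and G0: "dominated_linear_graph p G0"
  obtains M where "dominated_linear_graph p M" "G0 \<subseteq> M" "\<And>x. \<exists>a. (x, a) \<in> M"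
proof -
  define A where "A = {G. dominated_linear_graph p G \<and> G0 \<subseteq> G}"
  have "\<forall>C\<in>chains A. \<exists>U\<in>A. \<forall>X\<in>C. X \<subseteq> U"
  proof
    fix C assume C: "C \<in> chains A"
    show "\<exists>U\<in>A. \<forall>X\<in>C. X \<subseteq> U"
    proof (cases "C = {}")
      case True
      have "G0 \<in> A" using G0 unfolding A_def by simp
      with True show ?thesis by blast
    next
      case False
      then obtain X where "X \<in> C" by blast
      moreover have "C \<subseteq> A" using C unfolding chains_def by simp
      ultimately have "G0 \<subseteq> \<Union>C" unfolding A_def by blast
      then have "\<Union>C \<in> A"
        using dominated_linear_graph_Union_chain[OF C[unfolded A_def] False] unfolding A_def by simp
      then show ?thesis by blast
    qed
  qed
  from Zorn_Lemma2[OF this] obtain M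
    where "M \<in> A" and maximal: "\<And>X. X \<in> A \<Longrightarrow> M \<subseteq> X \<Longrightarrow> X = M"
    by blast
  then have M: "dominated_linear_graph p M" and "G0 \<subseteq> M" unfolding A_def by auto
  moreover have "\<exists>a. (x, a) \<in> M" for x
  proof (rule ccontr)
    assume "\<nexists>a. (x, a) \<in> M"
    then obtain M' where "dominated_linear_graph p M'" "M \<subset> M'"
      using dominated_linear_graph_extend[OF subadd pos_hom M] by blast
    moreover from this \<open>G0 \<subseteq> M\<close> have "M' \<in> A" unfolding A_def by auto
    ultimately show False using maximal by blast
  qed
  ultimately show ?thesis using that by blast
qed

theorem Hahn_Banach_dominated_extension:
  fixes p :: "'v::real_vector \<Rightarrow> real"
  assumes subadd: "\<And>x y. p (x + y) \<le> p x + p y"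
    and pos_hom: "\<And>c x. 0 \<le> c \<Longrightarrow> p (c *\<^sub>R x) = c * p x"
    and G0: "dominated_linear_graph p G0"
  obtains g where "linear g" "\<And>x. g x \<le> p x" "\<And>x a. (x, a) \<in> G0 \<Longrightarrow> g x = a"
proof -
  obtain M where M: "dominated_linear_graph p M" and "G0 \<subseteq> M" and total: "\<And>x. \<exists>a. (x, a) \<in> M"
    using total_dominated_linear_graph[OF subadd pos_hom G0] by blast
  define g where "g x = (THE a. (x, a) \<in> M)" for x
  have graph_g: "(x, g x) \<in> M" for x
  proof -
    have "\<exists>!a. (x, a) \<in> M" using total dominated_linear_graph_unique[OF M] by blast
    then show ?thesis unfolding g_def by (rule theI')
  qed
  have g_eq: "g x = a" if "(x, a) \<in> M" for x a
    using dominated_linear_graph_unique[OF M graph_g that] .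
  show ?thesis
  proof
    show "linear g"
    proof (rule linearI)
      show "g (x + y) = g x + g y" for x y
        by (rule g_eq[OF dominated_linear_graph_add[OF M graph_g graph_g]])
      show "g (c *\<^sub>R x) = c *\<^sub>R g x" for c x
        using g_eq[OF dominated_linear_graph_scaleR[OF M graph_g]] by simp
    qed
    show "g x \<le> p x" for x by (rule dominated_linear_graph_le[OF M graph_g])
    show "g x = a" if "(x, a) \<in> G0" for x a using g_eq that \<open>G0 \<subseteq> M\<close> by blast
  qed
qed

lemma subspace_add_scaleR_cancel:
  assumes "subspace V" "w \<notin> V" "v \<in> V" "v' \<in> V" and eq: "v + t *\<^sub>R w = v' + t' *\<^sub>R w"
  shows "t = t'"
proof (rule ccontr)
  assume "t \<noteq> t'"
  from eq have "(t' - t) *\<^sub>R w = v - v'" by (simp add: scaleR_diff_left algebra_simps)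
  moreover have "w = (1 / (t' - t)) *\<^sub>R ((t' - t) *\<^sub>R w)" using \<open>t \<noteq> t'\<close> by simp
  ultimately have "w = (1 / (t' - t)) *\<^sub>R (v - v')" by simp
  with assms(1,3,4) have "w \<in> V" by (simp add: subspace_diff subspace_scale)
  with \<open>w \<notin> V\<close> show False ..
qed

lemma dominated_linear_graph_subspace_line:
  fixes p :: "'v::real_vector \<Rightarrow> real"
  assumes pos_hom: "\<And>c x. 0 \<le> c \<Longrightarrow> p (c *\<^sub>R x) = c * p x"
    and nonneg: "\<And>x. 0 \<le> p x"
    and V: "subspace V" and "0 < e" and far: "\<And>v. v \<in> V \<Longrightarrow> e \<le> p (w - v)"
  shows "dominated_linear_graph p {(v + t *\<^sub>R w, t * e) | v t. v \<in> V}" (is "dominated_linear_graph p ?G")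
proof (rule dominated_linear_graphI)
  have "w \<notin> V" using far[of w] pos_hom[of 0 0] \<open>0 < e\<close> by auto
  note cancel = subspace_add_scaleR_cancel[OF V this]
  have dominated: "t * e \<le> p (v + t *\<^sub>R w)" if "v \<in> V" for v t
  proof (cases "t > 0")
    case False
    then have "t * e \<le> 0" using \<open>0 < e\<close> mult_nonpos_nonneg[of t e] by linarith
    then show ?thesis using nonneg[of "v + t *\<^sub>R w"] by linarith
  next
    case True
    have "t * e \<le> t * p (w - (- 1 / t) *\<^sub>R v)"
      using True that by (intro mult_left_mono far subspace_scale[OF V]) auto
    also have "\<dots> = p (t *\<^sub>R (w - (- 1 / t) *\<^sub>R v))" using True by (intro pos_hom[symmetric]) simp
    also have "t *\<^sub>R (w - (- 1 / t) *\<^sub>R v) = v + t *\<^sub>R w" using True by (simp add: algebra_simps)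
    finally show ?thesis .
  qed
  have GI: "(v + t *\<^sub>R w, t * e) \<in> ?G" if "v \<in> V" for v t
    using that by blast
  fix x a b
  assume "(x, a) \<in> ?G"
  then obtain v t where 1: "v \<in> V" "x = v + t *\<^sub>R w" "a = t * e" by blast
  then show "a \<le> p x" using dominated by simp
  show "(c *\<^sub>R x, c * a) \<in> ?G" for c
    using GI[OF subspace_scale[OF V 1(1), of c], where t = "c * t"] 1 by (simp add: algebra_simps)
  {
    fix y assume "(y, b) \<in> ?G"
    then obtain v' t' where 2: "v' \<in> V" "y = v' + t' *\<^sub>R w" "b = t' * e" by blast
    show "(x + y, a + b) \<in> ?G"
      using GI[OF subspace_add[OF V 1(1) 2(1)], where t = "t + t'"] 1 2 by (simp add: algebra_simps)
  }
  assume "(x, b) \<in> ?G"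
  then obtain v' t' where 2: "v' \<in> V" "x = v' + t' *\<^sub>R w" "b = t' * e" by blast
  show "a = b" using cancel[OF 1(1) 2(1)] 1 2 by simp
next
  show "(0, 0) \<in> ?G" using subspace_0[OF V] by (intro CollectI exI[of _ 0] exI[of _ 0]) simp
qed

corollary Hahn_Banach_separation:
  fixes p :: "'v::real_vector \<Rightarrow> real"
  assumes subadd: "\<And>x y. p (x + y) \<le> p x + p y"
    and pos_hom: "\<And>c x. 0 \<le> c \<Longrightarrow> p (c *\<^sub>R x) = c * p x"
    and nonneg: "\<And>x. 0 \<le> p x"
    and V: "subspace V" and "0 < e" and far: "\<And>v. v \<in> V \<Longrightarrow> e \<le> p (w - v)"
  obtains l where "linear l" "\<And>x. l x \<le> p x" "\<And>v. v \<in> V \<Longrightarrow> l v = 0" "l w = e"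
proof -
  let ?G = "{(v + t *\<^sub>R w, t * e) | v t. v \<in> V}"
  obtain l where "linear l" "\<And>x. l x \<le> p x" and l: "\<And>x a. (x, a) \<in> ?G \<Longrightarrow> l x = a"
    using Hahn_Banach_dominated_extension[OF subadd pos_hom
        dominated_linear_graph_subspace_line[OF pos_hom nonneg V \<open>0 < e\<close> far]] by blast
  moreover have "l v = 0" if "v \<in> V" for v
    by (rule l) (use that in \<open>intro CollectI exI[of _ v] exI[of _ 0], simp\<close>)
  moreover have "l w = e"
    by (rule l) (use subspace_0[OF V] in \<open>intro CollectI exI[of _ 0] exI[of _ 1], simp\<close>)
  ultimately show ?thesis using that by blast
qed


section \<open>Bounded bilinear forms and elementary tensors\<close>

lemma clinear_funD:
  assumes "clinear_fun cs F"
  shows clinear_fun_add: "F (x + y) = F x + F y"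
    and clinear_fun_cs: "F (cs c x) = c * F x"
  using assms unfolding clinear_fun_def by blast+

lemma clinear_fun_zero: "clinear_fun cs F \<Longrightarrow> F 0 = 0"
  using clinear_fun_add[of cs F 0 0] by simp

lemma clinear_fun_diff: "clinear_fun cs F \<Longrightarrow> F (x - y) = F x - F y"
  using clinear_fun_add[of cs F "x - y" y] by (simp add: algebra_simps)

lemma bbilD:
  assumes "T \<in> bbil cs"
  shows bbil_add_left: "T (x + x') y = T x y + T x' y"
    and bbil_cs_left: "T (cs c x) y = c * T x y"
    and bbil_zero_left: "T 0 y = 0"
    and bbil_diff_left: "T (x - x') y = T x y - T x' y"
proof -
  have "clinear_fun cs (\<lambda>x. T x y)" using assms unfolding bbil_def by blast
  then show "T (x + x') y = T x y + T x' y" "T (cs c x) y = c * T x y" "T 0 y = 0"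
    "T (x - x') y = T x y - T x' y"
    using clinear_fun_add clinear_fun_cs clinear_fun_zero clinear_fun_diff by fastforce+
qed

lemma elementary_tensor:
  assumes "\<forall>T\<in>bbil cs. F T = T u v"
  shows elementary_tensor_in_ptensor: "F \<in> ptensor cs"
    and ptnorm_elementary_tensor_le: "ptnorm cs F \<le> norm u * norm v"
    and ptnorm_elementary_tensor_nonneg: "0 \<le> ptnorm cs F"
proof -
  define a where "a = (\<lambda>n::nat. if n = 0 then u else 0)"
  define b where "b = (\<lambda>n::nat. if n = 0 then v else 0)"
  let ?R = "{(\<Sum>n. norm (a n) * norm (b n)) | a b :: nat \<Rightarrow> 'a.
              summable (\<lambda>n. norm (a n) * norm (b n)) \<and> (\<forall>T\<in>bbil cs. F T = (\<Sum>n. T (a n) (b n)))}"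
  have "(\<lambda>n. norm (a n) * norm (b n)) = (\<lambda>n. if n = 0 then norm u * norm v else 0)"
    unfolding a_def b_def by auto
  then have norms: "(\<lambda>n. norm (a n) * norm (b n)) sums (norm u * norm v)"
    using sums_single[of 0 "\<lambda>_. norm u * norm v"] by simp
  have "(\<lambda>n. T (a n) (b n)) sums T u v" if "T \<in> bbil cs" for T
  proof -
    have "(\<lambda>n. T (a n) (b n)) = (\<lambda>n. if n = 0 then T u v else 0)"
      unfolding a_def b_def using bbil_zero_left[OF that] by auto
    then show ?thesis using sums_single[of 0 "\<lambda>_. T u v"] by simp
  qed
  then have rep: "\<forall>T\<in>bbil cs. F T = (\<Sum>n. T (a n) (b n))" using assms sums_unique by metis
  then show "F \<in> ptensor cs" unfolding ptensor_def using sums_summable[OF norms] by blast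
  have mem: "norm u * norm v \<in> ?R" using rep sums_unique[OF norms] sums_summable[OF norms] by blast
  have "bdd_below ?R" by (rule bdd_belowI[of _ 0]) (auto intro!: suminf_nonneg)
  then show "ptnorm cs F \<le> norm u * norm v" unfolding ptnorm_def by (rule cInf_lower[OF mem])
  show "0 \<le> ptnorm cs F" unfolding ptnorm_def
    by (rule cInf_greatest) (use mem in \<open>auto intro!: suminf_nonneg\<close>)
qed


section \<open>Complex Banach algebras\<close>

text \<open>\<open>pos_power y n\<close> is \<open>y ^ Suc n\<close>; the algebra need not have a unit.\<close>

fun pos_power :: "'a::real_normed_algebra \<Rightarrow> nat \<Rightarrow> 'a" where
  "pos_power y 0 = y"
| "pos_power y (Suc n) = y * pos_power y n"

lemma norm_pos_power_le: "norm (pos_power y n) \<le> norm y ^ Suc n"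
proof (induction n)
  case (Suc n)
  have "norm (pos_power y (Suc n)) \<le> norm y * norm (pos_power y n)" by (simp add: norm_mult_ineq)
  also have "\<dots> \<le> norm y * norm y ^ Suc n" using Suc by (intro mult_left_mono) auto
  finally show ?case by simp
qed simp
locale complex_banach_algebra =
  fixes cs :: "complex \<Rightarrow> 'a::{real_normed_algebra,banach} \<Rightarrow> 'a"
  assumes cplx_banach_alg: "cplx_banach_alg cs"
begin

lemma cs_of_real: "cs (complex_of_real r) x = r *\<^sub>R x"
  and cs_cs: "cs c (cs d x) = cs (c * d) x"
  and cs_add_right: "cs c (x + y) = cs c x + cs c y"
  and cs_add_left: "cs (c + d) x = cs c x + cs d x"
  and norm_cs: "norm (cs c x) = cmod c * norm x"
  and cs_mult_right: "cs c (x * y) = x * cs c y"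
  using cplx_banach_alg unfolding cplx_banach_alg_def by blast+

lemma cs_zero_left [simp]: "cs 0 x = 0"
  using cs_of_real[of 0 x] by simp

lemma cs_zero_right [simp]: "cs c 0 = 0"
  using cs_add_right[of c 0 0] by simp

lemma cs_diff_left: "cs (c - d) x = cs c x - cs d x"
  using cs_add_left[of "c - d" d x] by (simp add: algebra_simps)

lemma cs_scaleR: "cs c (r *\<^sub>R x) = r *\<^sub>R cs c x"
  by (metis cs_cs cs_of_real mult.commute)

lemma cs_decomp: "cs c x = Re c *\<^sub>R x + Im c *\<^sub>R cs \<i> x"
proof -
  have "c = complex_of_real (Re c) + complex_of_real (Im c) * \<i>"
    by (simp add: complex_eq_iff)
  then have "cs c x = cs (complex_of_real (Re c) + complex_of_real (Im c) * \<i>) x"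
    by (rule arg_cong)
  then show ?thesis by (simp add: cs_add_left cs_cs[symmetric] cs_of_real)
qed

lemma clinear_fun_scaleR: "clinear_fun cs F \<Longrightarrow> F (r *\<^sub>R x) = complex_of_real r * F x"
  using clinear_fun_cs[of cs F "complex_of_real r" x] by (simp add: cs_of_real)

definition bounded_functional :: "('a \<Rightarrow> complex) \<Rightarrow> bool" where
  "bounded_functional F \<longleftrightarrow> clinear_fun cs F \<and> (\<exists>K. \<forall>x. cmod (F x) \<le> K * norm x)"

lemma bounded_functional_clinear: "bounded_functional F \<Longrightarrow> clinear_fun cs F"
  unfolding bounded_functional_def by blast

lemma bounded_functional_zero: "bounded_functional (\<lambda>u. 0)"
  unfolding bounded_functional_def clinear_fun_def by (auto intro: exI[of _ 0])

lemma bounded_functional_add: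
  assumes F: "bounded_functional F" and G: "bounded_functional G"
  shows "bounded_functional (\<lambda>u. F u + G u)"
proof -
  obtain K L where K: "\<And>x. cmod (F x) \<le> K * norm x" and L: "\<And>x. cmod (G x) \<le> L * norm x"
    using F G unfolding bounded_functional_def by blast
  have "cmod (F x + G x) \<le> (K + L) * norm x" for x
    using norm_triangle_ineq[of "F x" "G x"] K[of x] L[of x] by (simp add: distrib_right)
  moreover have "clinear_fun cs (\<lambda>u. F u + G u)"
    using F G unfolding bounded_functional_def clinear_fun_def by (simp add: algebra_simps)
  ultimately show ?thesis unfolding bounded_functional_def by blast
qed

lemma bounded_functional_cmult:
  assumes F: "bounded_functional F"
  shows "bounded_functional (\<lambda>u. c * F u)"
proof -
  obtain K where K: "\<And>x. cmod (F x) \<le> K * norm x" using F unfolding bounded_functional_def by blast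
  have "cmod (c * F x) \<le> (cmod c * K) * norm x" for x
    using K[of x] by (simp add: norm_mult mult.assoc mult_left_mono)
  moreover have "clinear_fun cs (\<lambda>u. c * F u)"
    using F unfolding bounded_functional_def clinear_fun_def by (simp add: algebra_simps)
  ultimately show ?thesis unfolding bounded_functional_def by blast
qed

lemma bounded_functional_mult_left:
  assumes F: "bounded_functional F"
  shows "bounded_functional (\<lambda>u. F (a * u))"
proof -
  obtain K where K: "\<And>x. cmod (F x) \<le> K * norm x" using F unfolding bounded_functional_def by blast
  have "cmod (F (a * x)) \<le> (max K 0 * norm a) * norm x" for x
  proof -
    have "cmod (F (a * x)) \<le> max K 0 * norm (a * x)"
      using K[of "a * x"] by (meson max.cobounded1 mult_right_mono norm_ge_zero order_trans)
    also have "\<dots> \<le> max K 0 * (norm a * norm x)"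
      by (intro mult_left_mono norm_mult_ineq) auto
    finally show ?thesis by (simp add: mult.assoc)
  qed
  moreover have "clinear_fun cs (\<lambda>u. F (a * u))"
    using F unfolding bounded_functional_def clinear_fun_def
    by (simp add: algebra_simps cs_mult_right[symmetric])
  ultimately show ?thesis unfolding bounded_functional_def by blast
qed

lemma bounded_functional_sum:
  "(\<And>j. j \<in> J \<Longrightarrow> bounded_functional (F j)) \<Longrightarrow> bounded_functional (\<lambda>u. \<Sum>j\<in>J. c j * F j u)"
  by (induction J rule: infinite_finite_induct)
    (auto intro!: bounded_functional_zero bounded_functional_add bounded_functional_cmult)

text \<open>A real-linear functional \<open>g\<close> is the real part of the complex-linear functional
  \<open>y \<mapsto> g y - \<i> g (\<i> y)\<close>.\<close>

definition complexification :: "('a \<Rightarrow> real) \<Rightarrow> 'a \<Rightarrow> complex" where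
  "complexification g y = complex_of_real (g y) - \<i> * complex_of_real (g (cs \<i> y))"

lemma Re_complexification [simp]: "Re (complexification g y) = g y"
  unfolding complexification_def by simp

lemma linear_cs_eq_Re_complexification:
  assumes "linear g"
  shows "g (cs c y) = Re (c * complexification g y)"
  unfolding complexification_def cs_decomp[of c y]
  by (simp add: linear_add[OF assms] linear_scale[OF assms])

lemma bounded_functional_complexification:
  assumes g: "linear g" and bound: "\<And>x. g x \<le> K * norm x"
  shows "bounded_functional (complexification g)"
proof -
  have abs_bound: "\<bar>g x\<bar> \<le> K * norm x" for x
    using bound[of x] bound[of "- x"] linear_neg[OF g, of x] by simp
  have "cmod (complexification g y) \<le> (2 * K) * norm y" for y
  proof -
    have "cmod (complexification g y)
        \<le> cmod (complex_of_real (g y)) + cmod (\<i> * complex_of_real (g (cs \<i> y)))"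
      unfolding complexification_def by (rule norm_triangle_ineq4)
    also have "\<dots> = \<bar>g y\<bar> + \<bar>g (cs \<i> y)\<bar>" by (simp add: norm_mult)
    also have "\<dots> \<le> (2 * K) * norm y"
      using abs_bound[of y] abs_bound[of "cs \<i> y"] by (simp add: norm_cs)
    finally show ?thesis .
  qed
  moreover have "clinear_fun cs (complexification g)"
    unfolding clinear_fun_def
  proof (intro conjI allI)
    show "complexification g (x + y) = complexification g x + complexification g y" for x y
      unfolding complexification_def by (simp add: cs_add_right linear_add[OF g] algebra_simps)
    show "complexification g (cs c x) = c * complexification g x" for c x
    proof -
      have "g (cs \<i> (cs c x)) = - Im c * g x + Re c * g (cs \<i> x)"
        using linear_cs_eq_Re_complexification[OF g, of "\<i> * c" x]
        by (simp add: cs_cs complexification_def)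
      then show ?thesis
        unfolding complexification_def linear_cs_eq_Re_complexification[OF g, of c x]
        by (simp add: complexification_def complex_eq_iff algebra_simps)
    qed
  qed
  ultimately show ?thesis unfolding bounded_functional_def by blast
qed

text \<open>Characters are automatically contractive: if \<open>\<bar>\<phi> x\<bar> > \<parallel>x\<parallel>\<close>, then \<open>y = x / \<phi> x\<close> has
  \<open>\<parallel>y\<parallel> < 1\<close> and \<open>\<phi> y = 1\<close>, and the Neumann series \<open>s = \<Sum> y\<^sup>n\<^sup>+\<^sup>1\<close> satisfies \<open>s = y + y s\<close>,
  whence \<open>\<phi> s = 1 + \<phi> s\<close>.\<close>

lemma character_norm_le:
  assumes ch: "character cs \<phi>"
  shows "cmod (\<phi> x) \<le> norm x"
proof (rule ccontr)
  assume "\<not> ?thesis"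
  then have less: "norm x < cmod (\<phi> x)" by simp
  have lin: "clinear_fun cs \<phi>" and mult: "\<And>x y. \<phi> (x * y) = \<phi> x * \<phi> y"
    using ch unfolding character_def by blast+
  define y where "y = cs (1 / \<phi> x) x"
  have "\<phi> x \<noteq> 0" using less by auto
  then have phi_y: "\<phi> y = 1" unfolding y_def using clinear_fun_cs[OF lin] by simp
  have "norm y < 1" unfolding y_def norm_cs using less \<open>\<phi> x \<noteq> 0\<close>
    by (simp add: norm_divide divide_less_eq)
  then have geometric: "summable (\<lambda>n. norm y ^ Suc n)" by (simp add: summable_geometric)
  have "summable (\<lambda>n. norm (pos_power y n))"
    by (rule summable_comparison_test'[OF geometric]) (simp only: real_norm_def abs_norm_cancel norm_pos_power_le)
  then have sum: "summable (pos_power y)" by (rule summable_norm_cancel)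
  define s where "s = suminf (pos_power y)"
  have "y * s = (\<Sum>n. y * pos_power y n)"
    unfolding s_def by (rule bounded_linear.suminf[OF bounded_linear_mult_right sum])
  also have "\<dots> = s - y" unfolding s_def using suminf_split_head[OF sum] by simp
  finally have "s = y + y * s" by (simp add: algebra_simps)
  then have "\<phi> s = \<phi> y + \<phi> y * \<phi> s" using clinear_fun_add[OF lin] mult by metis
  then show False using phi_y by simp
qed

lemma bounded_functional_character: "character cs \<phi> \<Longrightarrow> bounded_functional \<phi>"
  unfolding bounded_functional_def using character_norm_le
  by (metis character_def mult_1)

lemma bounded_functional_separates_points:
  assumes "z \<noteq> 0"
  obtains \<psi> where "bounded_functional \<psi>" "\<psi> z = 1"
proof -
  have "subspace {0::'a}" unfolding subspace_def by simp
  then obtain l where l: "linear l" "\<And>x. l x \<le> norm x" "l z = norm z"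
    using Hahn_Banach_separation[of norm "{0}" "norm z" z] assms
    by (auto intro: norm_triangle_ineq)
  have "bounded_functional (complexification l)"
    by (rule bounded_functional_complexification[OF l(1), where K = 1]) (simp add: l(2))
  moreover have "complexification l z \<noteq> 0"
    using l(3) assms by (metis Re_complexification norm_eq_zero zero_complex.sel(1))
  ultimately show ?thesis
    using that[OF bounded_functional_cmult[of _ "1 / complexification l z"]] by simp
qed

lemma bounded_functional_tensor_bbil:
  assumes F: "bounded_functional F" and G: "bounded_functional G"
  shows "(\<lambda>u v. F u * G v) \<in> bbil cs"
proof -
  obtain K L where K: "\<And>x. cmod (F x) \<le> K * norm x" and L: "\<And>x. cmod (G x) \<le> L * norm x"
    using F G unfolding bounded_functional_def by blast
  have "cmod (F u * G v) \<le> (max K 0 * max L 0) * norm u * norm v" for u v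
  proof -
    have "cmod (F u) \<le> max K 0 * norm u" "cmod (G v) \<le> max L 0 * norm v"
      using K[of u] L[of v] by (meson max.cobounded1 mult_right_mono norm_ge_zero order_trans)+
    then have "cmod (F u) * cmod (G v) \<le> (max K 0 * norm u) * (max L 0 * norm v)"
      by (intro mult_mono) auto
    then show ?thesis by (simp add: norm_mult algebra_simps)
  qed
  then have "bbil_bound (\<lambda>u v. F u * G v) (max K 0 * max L 0)" unfolding bbil_bound_def by blast
  moreover have "clinear_fun cs (\<lambda>v. F u * G v)" "clinear_fun cs (\<lambda>u. F u * G v)" for u v
    using bounded_functional_clinear[OF F] bounded_functional_clinear[OF G]
    unfolding clinear_fun_def by (simp_all add: algebra_simps)
  ultimately show ?thesis unfolding bbil_def by blast
qed

inductive_set finite_rank_ops :: "('a \<Rightarrow> 'a) set" where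
  finite_rank_ops_zero: "(\<lambda>y. 0) \<in> finite_rank_ops"
| finite_rank_ops_add_rank_one:
    "G \<in> finite_rank_ops \<Longrightarrow> bounded_functional \<psi> \<Longrightarrow> (\<lambda>y. G y + cs (\<psi> y) e) \<in> finite_rank_ops"

lemma finite_rank_ops_add:
  "G' \<in> finite_rank_ops \<Longrightarrow> G \<in> finite_rank_ops \<Longrightarrow> (\<lambda>y. G y + G' y) \<in> finite_rank_ops"
proof (induction G' rule: finite_rank_ops.induct)
  case (finite_rank_ops_add_rank_one G' \<psi> e)
  then have "(\<lambda>y. (G y + G' y) + cs (\<psi> y) e) \<in> finite_rank_ops"
    by (intro finite_rank_ops.finite_rank_ops_add_rank_one)
  then show ?case by (simp add: add.assoc)
qed simp

lemma finite_rank_ops_scaleR: "G \<in> finite_rank_ops \<Longrightarrow> (\<lambda>y. r *\<^sub>R G y) \<in> finite_rank_ops"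
proof (induction G rule: finite_rank_ops.induct)
  case (finite_rank_ops_add_rank_one G \<psi> e)
  then have "(\<lambda>y. r *\<^sub>R G y + cs (\<psi> y) (r *\<^sub>R e)) \<in> finite_rank_ops"
    by (intro finite_rank_ops.finite_rank_ops_add_rank_one)
  then show ?case by (simp add: cs_scaleR scaleR_add_right)
qed (simp add: finite_rank_ops_zero)

lemma finite_rank_ops_add_apply: "G \<in> finite_rank_ops \<Longrightarrow> G (x + y) = G x + G y"
  by (induction G rule: finite_rank_ops.induct)
    (simp_all add: clinear_fun_add[OF bounded_functional_clinear] cs_add_left algebra_simps)

lemma finite_rank_ops_cs_apply: "G \<in> finite_rank_ops \<Longrightarrow> G (cs c x) = cs c (G x)"
  by (induction G rule: finite_rank_ops.induct)
    (simp_all add: clinear_fun_cs[OF bounded_functional_clinear] cs_add_right cs_cs)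

lemma finite_rank_ops_bounded:
  "G \<in> finite_rank_ops \<Longrightarrow> \<exists>K. \<forall>x. norm (G x) \<le> K * norm x"
proof (induction G rule: finite_rank_ops.induct)
  case (finite_rank_ops_add_rank_one G \<psi> e)
  then obtain K L where K: "\<And>x. norm (G x) \<le> K * norm x" and L: "\<And>x. cmod (\<psi> x) \<le> L * norm x"
    unfolding bounded_functional_def by blast
  have "norm (G x + cs (\<psi> x) e) \<le> (K + L * norm e) * norm x" for x
  proof -
    have "norm (G x + cs (\<psi> x) e) \<le> norm (G x) + cmod (\<psi> x) * norm e"
      using norm_triangle_ineq[of "G x" "cs (\<psi> x) e"] by (simp add: norm_cs)
    also have "\<dots> \<le> K * norm x + (L * norm x) * norm e"
      using K[of x] L[of x] by (intro add_mono mult_right_mono) auto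
    finally show ?thesis by (simp add: algebra_simps)
  qed
  then show ?case by blast
qed (auto intro: exI[of _ 0])

end

locale functional_pairing = complex_banach_algebra cs
  for cs :: "complex \<Rightarrow> 'a::{real_normed_algebra,banach} \<Rightarrow> 'a" +
  fixes pair :: "'a \<Rightarrow> ('a \<Rightarrow> complex) \<Rightarrow> complex"
  assumes pair_add_left: "bounded_functional F \<Longrightarrow> pair (z1 + z2) F = pair z1 F + pair z2 F"
    and pair_cs_left: "bounded_functional F \<Longrightarrow> pair (cs c z) F = c * pair z F"
    and pair_add_right: "bounded_functional F \<Longrightarrow> bounded_functional G \<Longrightarrow>
      pair z (\<lambda>u. F u + G u) = pair z F + pair z G"
    and pair_cmult_right: "bounded_functional F \<Longrightarrow> pair z (\<lambda>u. c * F u) = c * pair z F"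
begin

lemma pair_sum_right:
  "finite K \<Longrightarrow> (\<And>j. j \<in> K \<Longrightarrow> bounded_functional (F j)) \<Longrightarrow>
    pair z (\<lambda>u. \<Sum>j\<in>K. c j * F j u) = (\<Sum>j\<in>K. c j * pair z (F j))"
proof (induction K rule: finite_induct)
  case empty
  have "pair z (\<lambda>u. 0 * 0) = 0 * pair z (\<lambda>u. 0)"
    by (rule pair_cmult_right[OF bounded_functional_zero])
  then show ?case by simp
next
  case (insert k K)
  then show ?case
    by (simp add: pair_add_right pair_cmult_right bounded_functional_cmult bounded_functional_sum)
qed

text \<open>The pairing is well defined on the algebraic tensor product of \<open>A\<close> and its dual:
  a finite sum \<open>\<Sum> z\<^sub>j \<otimes> F\<^sub>j\<close> annihilated by every \<open>\<psi> \<otimes> e\<close> is sent to \<open>0\<close>.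
  In the induction step, if \<open>z\<^sub>j\<^sub>0 \<noteq> 0\<close> a functional with \<open>\<psi>\<^sub>0 z\<^sub>j\<^sub>0 = 1\<close> expresses \<open>F\<^sub>j\<^sub>0\<close> as
  \<open>- \<Sum> \<psi>\<^sub>0(z\<^sub>j) F\<^sub>j\<close>, and the term of \<open>j\<^sub>0\<close> is absorbed by replacing \<open>z\<^sub>j\<close> with
  \<open>z\<^sub>j - \<psi>\<^sub>0(z\<^sub>j) z\<^sub>j\<^sub>0\<close>.\<close>

lemma sum_pair_eq_zero:
  assumes "finite J" and "\<And>j. j \<in> J \<Longrightarrow> bounded_functional (F j)"
    and "\<And>\<psi> e. bounded_functional \<psi> \<Longrightarrow> (\<Sum>j\<in>J. \<psi> (z j) * F j e) = 0"
  shows "(\<Sum>j\<in>J. pair (z j) (F j)) = 0"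
  using assms
proof (induction J arbitrary: z rule: finite_induct)
  case (insert j0 J)
  have F: "\<And>j. j \<in> J \<Longrightarrow> bounded_functional (F j)" and F0: "bounded_functional (F j0)"
    using insert.prems(1) by auto
  have null: "\<psi> (z j0) * F j0 e + (\<Sum>j\<in>J. \<psi> (z j) * F j e) = 0" if "bounded_functional \<psi>" for \<psi> e
    using insert.prems(2)[OF that] insert.hyps by simp
  show ?case
  proof (cases "z j0 = 0")
    case True
    have "(\<Sum>j\<in>J. pair (z j) (F j)) = 0"
    proof (rule insert.IH[OF F])
      fix \<psi> e assume \<psi>: "bounded_functional \<psi>"
      then have "\<psi> (z j0) = 0" using True clinear_fun_zero[OF bounded_functional_clinear] by simp
      then show "(\<Sum>j\<in>J. \<psi> (z j) * F j e) = 0" using null[OF \<psi>, of e] by simp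
    qed
    moreover have "pair (z j0) (F j0) = 0" using pair_cs_left[OF F0, of 0 0] True by simp
    ultimately show ?thesis using insert.hyps by simp
  next
    case False
    then obtain \<psi>0 where \<psi>0: "bounded_functional \<psi>0" "\<psi>0 (z j0) = 1"
      by (rule bounded_functional_separates_points)
    have F_j0: "F j0 = (\<lambda>e. \<Sum>j\<in>J. - \<psi>0 (z j) * F j e)"
      using null[OF \<psi>0(1)] \<psi>0(2) by (simp add: fun_eq_iff sum_negf eq_neg_iff_add_eq_0)
    define z' where "z' j = z j + cs (- \<psi>0 (z j)) (z j0)" for j
    have "(\<Sum>j\<in>J. pair (z' j) (F j)) = 0"
    proof (rule insert.IH[OF F])
      fix \<psi> e assume \<psi>: "bounded_functional \<psi>"
      note lin = bounded_functional_clinear[OF \<psi>]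
      have "(\<Sum>j\<in>J. \<psi> (z' j) * F j e)
          = (\<Sum>j\<in>J. \<psi> (z j) * F j e) + \<psi> (z j0) * (\<Sum>j\<in>J. - \<psi>0 (z j) * F j e)"
        unfolding z'_def clinear_fun_add[OF lin] clinear_fun_cs[OF lin]
        by (simp add: sum.distrib sum_distrib_left algebra_simps sum_subtractf sum_negf)
      also have "\<dots> = 0" using null[OF \<psi>, of e] F_j0 by (simp add: add.commute)
      finally show "(\<Sum>j\<in>J. \<psi> (z' j) * F j e) = 0" .
    qed
    moreover have "pair (z' j) (F j) = pair (z j) (F j) + - \<psi>0 (z j) * pair (z j0) (F j)" if "j \<in> J" for j
      unfolding z'_def using F[OF that] by (simp add: pair_add_left pair_cs_left)
    then have "(\<Sum>j\<in>J. pair (z' j) (F j))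
        = (\<Sum>j\<in>J. pair (z j) (F j)) + (\<Sum>j\<in>J. - \<psi>0 (z j) * pair (z j0) (F j))"
      by (simp add: sum_subtractf sum_negf cong: sum.cong)
    moreover have "(\<Sum>j\<in>J. - \<psi>0 (z j) * pair (z j0) (F j)) = pair (z j0) (F j0)"
      using pair_sum_right[OF insert.hyps(1) F, where z = "z j0" and c = "\<lambda>j. - \<psi>0 (z j)"] F_j0 by simp
    ultimately show ?thesis using insert.hyps by (simp add: add.commute)
  qed
qed simp

end


section \<open>Finitely supported families of vectors\<close>

instantiation "fun" :: (type, real_vector) real_vector
begin

definition scaleR_fun :: "real \<Rightarrow> ('a \<Rightarrow> 'b) \<Rightarrow> 'a \<Rightarrow> 'b" where
  "scaleR_fun r f = (\<lambda>x. r *\<^sub>R f x)"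

instance by standard (auto simp: scaleR_fun_def fun_eq_iff algebra_simps)

end

lemma scaleR_fun_apply [simp]: "(r *\<^sub>R f) x = r *\<^sub>R f x"
  by (simp add: scaleR_fun_def)

definition sum_norm :: "'i set \<Rightarrow> ('i \<Rightarrow> 'v::real_normed_vector) \<Rightarrow> real" where
  "sum_norm I v = (\<Sum>i\<in>I. norm (v i))"

lemma sum_norm_triangle: "sum_norm I (v + w) \<le> sum_norm I v + sum_norm I w"
  unfolding sum_norm_def by (simp add: sum.distrib[symmetric] sum_mono norm_triangle_ineq)

lemma sum_norm_scaleR: "sum_norm I (c *\<^sub>R v) = \<bar>c\<bar> * sum_norm I v"
  unfolding sum_norm_def by (simp add: sum_distrib_left)

lemma sum_norm_nonneg: "0 \<le> sum_norm I v"
  unfolding sum_norm_def by (simp add: sum_nonneg)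

lemma sum_norm_minus_commute: "sum_norm I (v - w) = sum_norm I (w - v)"
  unfolding sum_norm_def by (simp add: norm_minus_commute)

lemma norm_le_sum_norm: "finite I \<Longrightarrow> i \<in> I \<Longrightarrow> norm (v i) \<le> sum_norm I v"
  unfolding sum_norm_def by (rule member_le_sum) auto

lemma sum_norm_fun_upd_zero_le: "finite I \<Longrightarrow> sum_norm I (0(i := y)) \<le> norm y"
  unfolding sum_norm_def by (subst sum.cong[OF refl, of _ _ "\<lambda>j. if j = i then norm y else 0"]) auto

lemma linear_fun_upd_zero:
  assumes "linear l"
  shows "linear (\<lambda>y. l (0(i := y)))"
proof (rule linearI)
  show "l (0(i := y + z)) = l (0(i := y)) + l (0(i := z))" for y z
  proof -
    have "0(i := y + z) = 0(i := y) + 0(i := z)" by (auto simp: fun_eq_iff)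
    then show ?thesis by (simp add: linear_add[OF assms])
  qed
  show "l (0(i := r *\<^sub>R y)) = r *\<^sub>R l (0(i := y))" for r y
  proof -
    have "0(i := r *\<^sub>R y) = r *\<^sub>R 0(i := y)" by (auto simp: fun_eq_iff)
    then show ?thesis by (simp add: linear_scale[OF assms])
  qed
qed

lemma linear_eq_sum_fun_upd_zero:
  assumes "linear l" "finite K" "\<And>j. j \<notin> K \<Longrightarrow> v j = 0"
  shows "l v = (\<Sum>i\<in>K. l (0(i := v i)))"
  using assms(2,3)
proof (induction K arbitrary: v rule: finite_induct)
  case empty
  then have "v = 0" by (auto simp: fun_eq_iff)
  then show ?case by (simp only: sum.empty linear_0[OF assms(1)])
next
  case (insert k K)
  have "v = 0(k := v k) + v(k := 0)" by (auto simp: fun_eq_iff)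
  then have "l v = l (0(k := v k)) + l (v(k := 0))" by (metis linear_add[OF assms(1)])
  also have "l (v(k := 0)) = (\<Sum>i\<in>K. l (0(i := (v(k := 0)) i)))"
    using insert.prems by (intro insert.IH) auto
  also have "\<dots> = (\<Sum>i\<in>K. l (0(i := v i)))"
    using insert.hyps by (intro sum.cong) auto
  finally show ?case by (simp only: sum.insert[OF insert.hyps])
qed


section \<open>Consequences of \<open>\<phi>\<close>-biflatness\<close>

locale phi_biflat_data = complex_banach_algebra cs
  for cs :: "complex \<Rightarrow> 'a::{real_normed_algebra,banach} \<Rightarrow> 'a" +
  fixes \<phi> :: "'a \<Rightarrow> complex" and \<rho> :: "'a \<Rightarrow> (('a \<Rightarrow> 'a \<Rightarrow> complex) \<Rightarrow> complex)" and a0 :: 'a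
  assumes character: "character cs \<phi>"
    and bidual: "\<And>a. bidual_elem cs (\<rho> a)"
    and rho_add: "\<And>a b T. T \<in> bbil cs \<Longrightarrow> \<rho> (a + b) T = \<rho> a T + \<rho> b T"
    and rho_cs: "\<And>c a T. T \<in> bbil cs \<Longrightarrow> \<rho> (cs c a) T = c * \<rho> a T"
    and rho_lact: "\<And>a b T. T \<in> bbil cs \<Longrightarrow> \<rho> (a * b) T = lact a (\<rho> b) T"
    and rho_ract: "\<And>a b T. T \<in> bbil cs \<Longrightarrow> \<rho> (a * b) T = ract (\<rho> a) b T"
    and rho_phi: "\<And>a. \<rho> a (\<lambda>x y. \<phi> (x * y)) = \<phi> a"
    and phi_a0: "\<phi> a0 = 1"
begin

lemma phi_clinear: "clinear_fun cs \<phi>"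
  and phi_mult: "\<phi> (x * y) = \<phi> x * \<phi> y"
  using character unfolding character_def by blast+

lemma bounded_functional_phi: "bounded_functional \<phi>"
  by (rule bounded_functional_character[OF character])

lemma a0_nonzero: "a0 \<noteq> 0"
  using phi_a0 clinear_fun_zero[OF phi_clinear] by auto

lemma tensor_phi_bbil: "bounded_functional F \<Longrightarrow> (\<lambda>u v. F u * \<phi> v) \<in> bbil cs"
  by (rule bounded_functional_tensor_bbil[OF _ bounded_functional_phi])

definition rho_pair :: "'a \<Rightarrow> ('a \<Rightarrow> complex) \<Rightarrow> complex" where
  "rho_pair z F = \<rho> z (\<lambda>u v. F u * \<phi> v)"

sublocale functional_pairing cs rho_pair
proof
  have add: "\<rho> z (\<lambda>x y. S x y + T x y) = \<rho> z S + \<rho> z T"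
    and mult: "\<rho> z (\<lambda>x y. c * T x y) = c * \<rho> z T" if "S \<in> bbil cs" "T \<in> bbil cs" for S T z c
    using bidual[of z] that unfolding bidual_elem_def by blast+
  fix F G z z1 z2 c
  assume F: "bounded_functional F"
  show "rho_pair (z1 + z2) F = rho_pair z1 F + rho_pair z2 F"
    unfolding rho_pair_def by (rule rho_add[OF tensor_phi_bbil[OF F]])
  show "rho_pair (cs c z) F = c * rho_pair z F"
    unfolding rho_pair_def by (rule rho_cs[OF tensor_phi_bbil[OF F]])
  show "rho_pair z (\<lambda>u. c * F u) = c * rho_pair z F"
    using mult[OF tensor_phi_bbil[OF F] tensor_phi_bbil[OF F]] unfolding rho_pair_def
    by (simp add: mult.assoc)
  assume G: "bounded_functional G"
  show "rho_pair z (\<lambda>u. F u + G u) = rho_pair z F + rho_pair z G"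
    using add[OF tensor_phi_bbil[OF F] tensor_phi_bbil[OF G]] unfolding rho_pair_def
    by (simp add: distrib_right)
qed

lemma rho_pair_mult_left: "bounded_functional F \<Longrightarrow> rho_pair x (\<lambda>u. F (a * u)) = rho_pair (a * x) F"
  unfolding rho_pair_def using rho_lact[OF tensor_phi_bbil] unfolding lact_def by simp

lemma rho_pair_mult_right: "bounded_functional F \<Longrightarrow> rho_pair (x * a) F = \<phi> a * rho_pair x F"
proof -
  assume F: "bounded_functional F"
  have "rho_pair (x * a) F = \<rho> x (\<lambda>u v. \<phi> a * (F u * \<phi> v))"
    unfolding rho_pair_def using rho_ract[OF tensor_phi_bbil[OF F]]
    by (simp add: ract_def phi_mult algebra_simps)
  also have "\<dots> = \<phi> a * rho_pair x F"
    using pair_cmult_right[OF F, of x "\<phi> a"] unfolding rho_pair_def by (simp add: mult.assoc)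
  finally show ?thesis .
qed

lemma rho_pair_phi: "rho_pair x (\<lambda>u. c * \<phi> u) = c * \<phi> x"
  using pair_cmult_right[OF bounded_functional_phi, of x c] rho_phi[of x]
  unfolding rho_pair_def by (simp add: phi_mult)

definition test_index :: "'a set \<Rightarrow> (('a \<times> 'a) \<times> nat) set" where
  "test_index S = (S \<times> S) \<times> {0, 1, 2}"

text \<open>The approximate conditions on \<open>S\<close>, one component per index \<open>((a, x), k)\<close>: the left
  module defect (\<open>k = 0\<close>), the right character defect (\<open>k = 1\<close>), and \<open>\<phi> (G x) a0\<close>, which
  should approximate the component \<open>\<phi> x a0\<close> of \<open>test_target S\<close> (\<open>k = 2\<close>).\<close>

definition test_vector :: "'a set \<Rightarrow> ('a \<Rightarrow> 'a) \<Rightarrow> ('a \<times> 'a) \<times> nat \<Rightarrow> 'a" where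
  "test_vector S G = (\<lambda>((a, x), k). if a \<in> S \<and> x \<in> S then
      (if k = 0 then a * G x - G (a * x) else if k = 1 then G (x * a) - cs (\<phi> a) (G x)
       else if k = 2 then cs (\<phi> (G x)) a0 else 0) else 0)"

definition test_target :: "'a set \<Rightarrow> ('a \<times> 'a) \<times> nat \<Rightarrow> 'a" where
  "test_target S = (\<lambda>((a, x), k). if a \<in> S \<and> x \<in> S \<and> k = 2 then cs (\<phi> x) a0 else 0)"

lemma finite_test_index: "finite S \<Longrightarrow> finite (test_index S)"
  unfolding test_index_def by simp

lemma sum_test_index:
  "(\<Sum>i\<in>test_index S. f i) = (\<Sum>ax\<in>S \<times> S. f (ax, 0) + f (ax, 1) + f (ax, 2))"
proof -
  have "(\<Sum>i\<in>test_index S. f i) = (\<Sum>ax\<in>S \<times> S. \<Sum>k\<in>{0, 1, 2}. f (ax, k))"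
    unfolding test_index_def by (subst sum.cartesian_product) simp
  then show ?thesis by (simp add: add.assoc)
qed

lemma test_vector_outside: "i \<notin> test_index S \<Longrightarrow> test_vector S G i = 0"
  and test_target_outside: "i \<notin> test_index S \<Longrightarrow> test_target S i = 0"
  unfolding test_index_def test_vector_def test_target_def by (auto split: prod.splits)

lemma test_vector_add: "test_vector S (\<lambda>y. G y + G' y) = test_vector S G + test_vector S G'"
  unfolding test_vector_def
  by (auto simp: fun_eq_iff clinear_fun_add[OF phi_clinear] cs_add_right cs_add_left algebra_simps)

lemma test_vector_scaleR: "test_vector S (\<lambda>y. r *\<^sub>R G y) = r *\<^sub>R test_vector S G"
proof -
  have "cs (\<phi> (r *\<^sub>R y)) a0 = r *\<^sub>R cs (\<phi> y) a0" for y
    using cs_cs[of "complex_of_real r" "\<phi> y" a0] by (simp add: clinear_fun_scaleR[OF phi_clinear] cs_of_real)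
  then show ?thesis
    unfolding test_vector_def by (auto simp: fun_eq_iff cs_scaleR algebra_simps scaleR_diff_right)
qed

lemma subspace_test_vectors: "subspace (test_vector S ` finite_rank_ops)"
  unfolding subspace_def
proof (intro conjI ballI allI)
  have "test_vector S (\<lambda>y. 0) = 0"
    unfolding test_vector_def by (auto simp: fun_eq_iff clinear_fun_zero[OF phi_clinear])
  then show "0 \<in> test_vector S ` finite_rank_ops"
    using finite_rank_ops_zero by (metis image_eqI)
next
  fix u v assume "u \<in> test_vector S ` finite_rank_ops" "v \<in> test_vector S ` finite_rank_ops"
  then obtain G G' where "G \<in> finite_rank_ops" "G' \<in> finite_rank_ops"
    and "u = test_vector S G" "v = test_vector S G'" by blast
  then show "u + v \<in> test_vector S ` finite_rank_ops"
    using finite_rank_ops_add by (auto simp: test_vector_add[symmetric])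
next
  fix c u assume "u \<in> test_vector S ` finite_rank_ops"
  then obtain G where "G \<in> finite_rank_ops" "u = test_vector S G" by blast
  then show "c *\<^sub>R u \<in> test_vector S ` finite_rank_ops"
    using finite_rank_ops_scaleR by (auto simp: test_vector_scaleR[symmetric])
qed

end

locale test_annihilator = phi_biflat_data cs \<phi> \<rho> a0
  for cs :: "complex \<Rightarrow> 'a::{real_normed_algebra,banach} \<Rightarrow> 'a"
    and \<phi> \<rho> a0 +
  fixes S :: "'a set" and l :: "(('a \<times> 'a) \<times> nat \<Rightarrow> 'a) \<Rightarrow> real"
  assumes finite_S: "finite S" and linear_l: "linear l"
    and l_fun_upd_zero_le: "\<And>i y. l (0(i := y)) \<le> norm y"
    and l_test_vector: "\<And>G. G \<in> finite_rank_ops \<Longrightarrow> l (test_vector S G) = 0"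
begin

definition component :: "('a \<times> 'a) \<times> nat \<Rightarrow> 'a \<Rightarrow> complex" where
  "component i = complexification (\<lambda>y. l (0(i := y)))"

lemma bounded_functional_component: "bounded_functional (component i)"
  unfolding component_def
  by (rule bounded_functional_complexification[OF linear_fun_upd_zero[OF linear_l], where K = 1])
    (simp add: l_fun_upd_zero_le)

lemma l_fun_upd_zero_cs: "l (0(i := cs c y)) = Re (c * component i y)"
  unfolding component_def
  by (rule linear_cs_eq_Re_complexification[OF linear_fun_upd_zero[OF linear_l]])

lemma l_fun_upd_zero_zero: "l (0(i := 0)) = 0"
  using linear_0[OF linear_fun_upd_zero[OF linear_l]] by simp

lemma l_fun_upd_zero_diff: "l (0(i := y - z)) = l (0(i := y)) - l (0(i := z))"
  by (rule linear_diff[OF linear_fun_upd_zero[OF linear_l]])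

lemma l_eq_sum_test_index:
  assumes "\<And>j. j \<notin> test_index S \<Longrightarrow> v j = 0"
  shows "l v = (\<Sum>ax\<in>S \<times> S. l (0((ax, 0) := v (ax, 0))) + l (0((ax, 1) := v (ax, 1)))
                               + l (0((ax, 2) := v (ax, 2))))"
  using linear_eq_sum_fun_upd_zero[OF linear_l finite_test_index[OF finite_S] assms]
  by (simp add: sum_test_index)

text \<open>For \<open>\<psi> \<otimes> e\<close>, the value of \<open>l\<close> on the test vector of the rank-one operator
  \<open>\<psi> (\<cdot>) e\<close> is the real part of the pairing of \<open>\<psi> \<otimes> e\<close> with the element
  \<open>\<Sum>\<^sub>(\<^sub>a\<^sub>,\<^sub>x\<^sub>) x \<otimes> (\<Lambda>\<^sub>0 (a \<cdot>) - \<phi> a \<Lambda>\<^sub>1 + \<Lambda>\<^sub>2 a0 \<phi>) - a x \<otimes> \<Lambda>\<^sub>0 + x a \<otimes> \<Lambda>\<^sub>1\<close> of the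
  algebraic tensor product of \<open>A\<close> and its dual, where \<open>\<Lambda>\<^sub>k = component ((a, x), k)\<close>.
  So this element vanishes; pairing it with \<open>\<rho>\<close> instead leaves \<open>\<Sum> \<Lambda>\<^sub>2 a0 \<phi> x\<close>, which
  gives \<open>l\<close> on the target.\<close>

definition tensor_left :: "('a \<times> 'a) \<times> nat \<Rightarrow> 'a" where
  "tensor_left = (\<lambda>((a, x), k). if k = 0 then x else if k = 1 then a * x else x * a)"

definition tensor_right :: "('a \<times> 'a) \<times> nat \<Rightarrow> 'a \<Rightarrow> complex" where
  "tensor_right = (\<lambda>((a, x), k).
     if k = 0 then (\<lambda>u. component ((a, x), 0) (a * u) + (- \<phi> a) * component ((a, x), 1) u
                        + component ((a, x), 2) a0 * \<phi> u)
     else if k = 1 then (\<lambda>u. (- 1) * component ((a, x), 0) u)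
     else component ((a, x), 1))"

lemma tensor_left_simps:
  "tensor_left ((a, x), 0) = x" "tensor_left ((a, x), 1) = a * x" "tensor_left ((a, x), 2) = x * a"
  unfolding tensor_left_def by simp_all

lemma tensor_right_simps:
  "tensor_right ((a, x), 0) = (\<lambda>u. component ((a, x), 0) (a * u)
      + (- \<phi> a) * component ((a, x), 1) u + component ((a, x), 2) a0 * \<phi> u)"
  "tensor_right ((a, x), 1) = (\<lambda>u. (- 1) * component ((a, x), 0) u)"
  "tensor_right ((a, x), 2) = component ((a, x), 1)"
  unfolding tensor_right_def by simp_all

lemma bounded_functional_tensor_right: "bounded_functional (tensor_right i)"
proof -
  obtain a x k where i: "i = ((a, x), k)" by (metis prod.exhaust)
  note \<Lambda> = bounded_functional_component
  have "bounded_functional (tensor_right ((a, x), 0))"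
    unfolding tensor_right_simps
    by (intro bounded_functional_add bounded_functional_cmult bounded_functional_mult_left
        \<Lambda> bounded_functional_phi)
  moreover have "bounded_functional (tensor_right ((a, x), 1))"
    unfolding tensor_right_simps by (rule bounded_functional_cmult[OF \<Lambda>])
  moreover have "tensor_right ((a, x), k) = component ((a, x), 1)" if "k \<noteq> 0" "k \<noteq> 1"
    using that unfolding tensor_right_def by simp
  ultimately show ?thesis using i \<Lambda> by (cases "k = 0 \<or> k = 1") auto
qed

lemma Re_sum_tensor_eq_l_test_vector:
  assumes \<psi>: "bounded_functional \<psi>"
  shows "Re (\<Sum>i\<in>test_index S. \<psi> (tensor_left i) * tensor_right i e)
    = l (test_vector S (\<lambda>y. cs (\<psi> y) e))"
proof -
  let ?v = "test_vector S (\<lambda>y. cs (\<psi> y) e)"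
  let ?t = "\<lambda>i. \<psi> (tensor_left i) * tensor_right i e"
  have "l ?v = (\<Sum>ax\<in>S \<times> S. l (0((ax, 0) := ?v (ax, 0))) + l (0((ax, 1) := ?v (ax, 1)))
                               + l (0((ax, 2) := ?v (ax, 2))))"
    by (rule l_eq_sum_test_index) (rule test_vector_outside)
  also have "\<dots> = (\<Sum>ax\<in>S \<times> S. Re (?t (ax, 0) + ?t (ax, 1) + ?t (ax, 2)))"
  proof (rule sum.cong[OF refl])
    fix ax assume "ax \<in> S \<times> S"
    then obtain a x where ax: "ax = (a, x)" "a \<in> S" "x \<in> S" by blast
    have v: "?v (ax, 0) = cs (\<psi> x) (a * e) - cs (\<psi> (a * x)) e"
      "?v (ax, 1) = cs (\<psi> (x * a)) e - cs (\<phi> a * \<psi> x) e"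
      "?v (ax, 2) = cs (\<psi> x * \<phi> e) a0"
      unfolding test_vector_def using ax
      by (simp_all add: cs_mult_right cs_cs clinear_fun_cs[OF phi_clinear])
    show "l (0((ax, 0) := ?v (ax, 0))) + l (0((ax, 1) := ?v (ax, 1))) + l (0((ax, 2) := ?v (ax, 2)))
        = Re (?t (ax, 0) + ?t (ax, 1) + ?t (ax, 2))"
      unfolding v unfolding ax(1) tensor_left_simps tensor_right_simps l_fun_upd_zero_diff l_fun_upd_zero_cs
      by (simp add: algebra_simps)
  qed
  also have "\<dots> = Re (\<Sum>i\<in>test_index S. ?t i)" by (simp add: sum_test_index Re_sum)
  finally show ?thesis ..
qed

lemma sum_tensor_eq_zero:
  assumes \<psi>: "bounded_functional \<psi>"
  shows "(\<Sum>i\<in>test_index S. \<psi> (tensor_left i) * tensor_right i e) = 0"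
proof -
  have vanish: "Re (\<Sum>i\<in>test_index S. \<theta> (tensor_left i) * tensor_right i e) = 0"
    if \<theta>: "bounded_functional \<theta>" for \<theta>
  proof -
    have "(\<lambda>y. 0 + cs (\<theta> y) e) \<in> finite_rank_ops"
      by (rule finite_rank_ops_add_rank_one[OF finite_rank_ops_zero \<theta>])
    then have "l (test_vector S (\<lambda>y. cs (\<theta> y) e)) = 0" using l_test_vector by simp
    then show ?thesis unfolding Re_sum_tensor_eq_l_test_vector[OF \<theta>] .
  qed
  have "Re (\<Sum>i\<in>test_index S. (- \<i> * \<psi> (tensor_left i)) * tensor_right i e) = 0"
    by (rule vanish[OF bounded_functional_cmult[OF \<psi>]])
  moreover have "(\<Sum>i\<in>test_index S. (- \<i> * \<psi> (tensor_left i)) * tensor_right i e)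
      = - \<i> * (\<Sum>i\<in>test_index S. \<psi> (tensor_left i) * tensor_right i e)"
    by (simp add: sum_distrib_left mult.assoc)
  ultimately have "Im (\<Sum>i\<in>test_index S. \<psi> (tensor_left i) * tensor_right i e) = 0"
    by simp
  with vanish[OF \<psi>] show ?thesis by (simp add: complex_eq_iff)
qed

lemma sum_rho_pair_tensor:
  "(\<Sum>i\<in>test_index S. rho_pair (tensor_left i) (tensor_right i))
    = (\<Sum>(a, x)\<in>S \<times> S. component ((a, x), 2) a0 * \<phi> x)"
  unfolding sum_test_index
proof (rule sum.cong[OF refl], clarify)
  fix a x
  note \<Lambda> = bounded_functional_component
  have A: "bounded_functional (\<lambda>u. component ((a, x), 0) (a * u))"
    by (rule bounded_functional_mult_left[OF \<Lambda>])
  have B: "bounded_functional (\<lambda>u. (- \<phi> a) * component ((a, x), 1) u)"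
    by (rule bounded_functional_cmult[OF \<Lambda>])
  have C: "bounded_functional (\<lambda>u. component ((a, x), 2) a0 * \<phi> u)"
    by (rule bounded_functional_cmult[OF bounded_functional_phi])
  have "rho_pair x (tensor_right ((a, x), 0))
      = rho_pair (a * x) (component ((a, x), 0)) + (- \<phi> a) * rho_pair x (component ((a, x), 1))
        + component ((a, x), 2) a0 * \<phi> x"
    unfolding tensor_right_simps
    by (simp only: pair_add_right[OF bounded_functional_add[OF A B] C] pair_add_right[OF A B]
        pair_cmult_right[OF \<Lambda>] rho_pair_mult_left[OF \<Lambda>] rho_pair_phi)
  moreover have "rho_pair (a * x) (tensor_right ((a, x), 1))
      = (- 1) * rho_pair (a * x) (component ((a, x), 0))"
    unfolding tensor_right_simps by (rule pair_cmult_right[OF \<Lambda>])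
  moreover have "rho_pair (x * a) (tensor_right ((a, x), 2)) = \<phi> a * rho_pair x (component ((a, x), 1))"
    unfolding tensor_right_simps by (rule rho_pair_mult_right[OF \<Lambda>])
  ultimately show "rho_pair (tensor_left ((a, x), 0)) (tensor_right ((a, x), 0))
      + rho_pair (tensor_left ((a, x), 1)) (tensor_right ((a, x), 1))
      + rho_pair (tensor_left ((a, x), 2)) (tensor_right ((a, x), 2))
    = component ((a, x), 2) a0 * \<phi> x"
    unfolding tensor_left_simps by simp
qed

theorem l_test_target: "l (test_target S) = 0"
proof -
  let ?v = "test_target S"
  have "l ?v = (\<Sum>ax\<in>S \<times> S. l (0((ax, 0) := ?v (ax, 0))) + l (0((ax, 1) := ?v (ax, 1)))
                               + l (0((ax, 2) := ?v (ax, 2))))"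
    by (rule l_eq_sum_test_index) (rule test_target_outside)
  also have "\<dots> = Re (\<Sum>(a, x)\<in>S \<times> S. component ((a, x), 2) a0 * \<phi> x)"
    unfolding Re_sum
    by (intro sum.cong) (auto simp: test_target_def l_fun_upd_zero_cs l_fun_upd_zero_zero mult.commute)
  also have "\<dots> = 0"
    using sum_pair_eq_zero[where z = tensor_left and F = tensor_right,
        OF finite_test_index[OF finite_S] bounded_functional_tensor_right sum_tensor_eq_zero]
    by (simp add: sum_rho_pair_tensor)
  finally show ?thesis .
qed

end


section \<open>The approximating net\<close>

context phi_biflat_data
begin

lemma finite_rank_approximation:
  assumes "finite S" and "0 < e"
  shows "\<exists>G\<in>finite_rank_ops. sum_norm (test_index S) (test_vector S G - test_target S) < e"
proof (rule ccontr)
  assume "\<not> ?thesis"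
  then have far: "e \<le> sum_norm (test_index S) (test_target S - v)"
    if "v \<in> test_vector S ` finite_rank_ops" for v
    using that by (auto simp: not_less sum_norm_minus_commute)
  have pos_hom: "sum_norm (test_index S) (c *\<^sub>R v) = c * sum_norm (test_index S) v" if "0 \<le> c" for c v
    using that by (simp add: sum_norm_scaleR)
  obtain l where l: "linear l" "\<And>v. l v \<le> sum_norm (test_index S) v"
    "\<And>v. v \<in> test_vector S ` finite_rank_ops \<Longrightarrow> l v = 0" "l (test_target S) = e"
    using Hahn_Banach_separation[where p = "sum_norm (test_index S)", OF sum_norm_triangle pos_hom
          sum_norm_nonneg subspace_test_vectors \<open>0 < e\<close> far] by metis
  interpret test_annihilator cs \<phi> \<rho> a0 S l
  proof
    show "l (0(i := y)) \<le> norm y" for i y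
      using l(2)[of "0(i := y)"] sum_norm_fun_upd_zero_le[OF finite_test_index[OF \<open>finite S\<close>]]
      by (rule order_trans)
    show "l (test_vector S G) = 0" if "G \<in> finite_rank_ops" for G
      using l(3) that by blast
  qed (use assms l(1) in \<open>auto simp: linear_add linear_scale\<close>)
  show False using l_test_target l(4) \<open>0 < e\<close> by simp
qed

definition approx_op :: "'a set \<times> real \<Rightarrow> 'a \<Rightarrow> 'a" where
  "approx_op i = (if finite (fst i) \<and> 0 < snd i
     then (SOME G. G \<in> finite_rank_ops \<and>
             sum_norm (test_index (fst i)) (test_vector (fst i) G - test_target (fst i)) < snd i)
     else (\<lambda>y. 0))"

lemma approx_op_finite_rank: "approx_op i \<in> finite_rank_ops"
  and approx_op_error:
    "finite (fst i) \<Longrightarrow> 0 < snd i \<Longrightarrow>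
      sum_norm (test_index (fst i)) (test_vector (fst i) (approx_op i) - test_target (fst i)) < snd i"
proof -
  have chosen: "approx_op i \<in> finite_rank_ops \<and>
      sum_norm (test_index (fst i)) (test_vector (fst i) (approx_op i) - test_target (fst i)) < snd i"
    if "finite (fst i)" "0 < snd i"
    using someI_ex[OF finite_rank_approximation[OF that, unfolded Bex_def]] that
    unfolding approx_op_def by simp
  then show "approx_op i \<in> finite_rank_ops"
    by (cases "finite (fst i) \<and> 0 < snd i") (auto simp: approx_op_def finite_rank_ops_zero)
  show "sum_norm (test_index (fst i)) (test_vector (fst i) (approx_op i) - test_target (fst i)) < snd i"
    if "finite (fst i)" "0 < snd i"
    using chosen[OF that] by blast
qed

lemma norm_test_component_less:
  assumes "finite (fst i)" "0 < snd i" "a \<in> fst i" "x \<in> fst i" "k \<in> {0, 1, 2}"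
  shows "norm ((test_vector (fst i) (approx_op i) - test_target (fst i)) ((a, x), k)) < snd i"
proof -
  have "((a, x), k) \<in> test_index (fst i)" using assms(3-5) unfolding test_index_def by blast
  then have "norm ((test_vector (fst i) (approx_op i) - test_target (fst i)) ((a, x), k))
      \<le> sum_norm (test_index (fst i)) (test_vector (fst i) (approx_op i) - test_target (fst i))"
    by (rule norm_le_sum_norm[OF finite_test_index[OF assms(1)]])
  also have "\<dots> < snd i" by (rule approx_op_error[OF assms(1,2)])
  finally show ?thesis .
qed

definition approx_net_filter :: "('a set \<times> real) filter" where
  "approx_net_filter = finite_subsets_at_top UNIV \<times>\<^sub>F at_right 0"

lemma approx_net_filter_neq_bot: "approx_net_filter \<noteq> bot"
  unfolding approx_net_filter_def prod_filter_eq_bot by simp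

lemma eventually_approx_net_filter:
  assumes "finite X" and "0 < \<epsilon>"
  shows "eventually (\<lambda>i. X \<subseteq> fst i \<and> finite (fst i) \<and> 0 < snd i \<and> snd i < \<epsilon>) approx_net_filter"
proof -
  have "eventually (\<lambda>S. X \<subseteq> S \<and> finite S) (finite_subsets_at_top UNIV)"
    unfolding eventually_finite_subsets_at_top using assms(1) by blast
  moreover have "eventually (\<lambda>e. 0 < e \<and> e < \<epsilon>) (at_right (0::real))"
    using eventually_at_right_real[OF assms(2)] by simp
  ultimately show ?thesis
    unfolding approx_net_filter_def eventually_prod_filter by fastforce
qed

lemma tendsto_approx_op_defects:
  shows tendsto_approx_op_left_defect:
      "((\<lambda>i. norm (a * approx_op i x - approx_op i (a * x))) \<longlongrightarrow> 0) approx_net_filter"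
    and tendsto_approx_op_right_defect:
      "((\<lambda>i. norm (approx_op i (x * a) - cs (\<phi> a) (approx_op i x))) \<longlongrightarrow> 0) approx_net_filter"
proof -
  have small: "eventually (\<lambda>i. norm (a * approx_op i x - approx_op i (a * x)) < \<epsilon>
      \<and> norm (approx_op i (x * a) - cs (\<phi> a) (approx_op i x)) < \<epsilon>) approx_net_filter"
    if "0 < \<epsilon>" for \<epsilon>
    using eventually_approx_net_filter[of "{a, x}" \<epsilon>] that
  proof (simp, elim eventually_mono)
    fix i assume "a \<in> fst i \<and> x \<in> fst i \<and> finite (fst i) \<and> 0 < snd i \<and> snd i < \<epsilon>"
    then show "norm (a * approx_op i x - approx_op i (a * x)) < \<epsilon>
      \<and> norm (approx_op i (x * a) - cs (\<phi> a) (approx_op i x)) < \<epsilon>"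
      using norm_test_component_less[of i a x 0] norm_test_component_less[of i a x 1]
      unfolding test_vector_def test_target_def by auto
  qed
  show "((\<lambda>i. norm (a * approx_op i x - approx_op i (a * x))) \<longlongrightarrow> 0) approx_net_filter"
    and "((\<lambda>i. norm (approx_op i (x * a) - cs (\<phi> a) (approx_op i x))) \<longlongrightarrow> 0) approx_net_filter"
    by (rule tendstoI, drule small, erule eventually_mono, simp)+
qed

lemma tendsto_phi_approx_op: "((\<lambda>i. \<phi> (approx_op i x)) \<longlongrightarrow> \<phi> x) approx_net_filter"
proof (rule tendstoI)
  fix \<epsilon> :: real assume "0 < \<epsilon>"
  have norm_a0: "0 < norm a0" using a0_nonzero by simp
  show "eventually (\<lambda>i. dist (\<phi> (approx_op i x)) (\<phi> x) < \<epsilon>) approx_net_filter"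
    using eventually_approx_net_filter[of "{x}" "\<epsilon> * norm a0"] \<open>0 < \<epsilon>\<close> norm_a0
  proof (simp, elim eventually_mono)
    fix i assume "x \<in> fst i \<and> finite (fst i) \<and> 0 < snd i \<and> snd i < \<epsilon> * norm a0"
    then have "norm (cs (\<phi> (approx_op i x)) a0 - cs (\<phi> x) a0) < \<epsilon> * norm a0"
      using norm_test_component_less[of i x x 2] unfolding test_vector_def test_target_def by auto
    then show "dist (\<phi> (approx_op i x)) (\<phi> x) < \<epsilon>"
      using norm_a0 by (simp add: cs_diff_left[symmetric] norm_cs dist_norm)
  qed
qed

definition approx_net :: "'a set \<times> real \<Rightarrow> 'a \<Rightarrow> ('a \<Rightarrow> 'a \<Rightarrow> complex) \<Rightarrow> complex" where
  "approx_net i x = (\<lambda>T. T (approx_op i x) a0)"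

lemma approx_net_bounded_linear:
  "(\<forall>x. approx_net i x \<in> ptensor cs) \<and>
   (\<forall>x y. \<forall>T\<in>bbil cs. approx_net i (x + y) T = approx_net i x T + approx_net i y T) \<and>
   (\<forall>c x. \<forall>T\<in>bbil cs. approx_net i (cs c x) T = c * approx_net i x T) \<and>
   (\<exists>C. \<forall>x. ptnorm cs (approx_net i x) \<le> C * norm x)"
proof (intro conjI allI ballI)
  note G = approx_op_finite_rank[of i]
  show "approx_net i x \<in> ptensor cs" for x
    unfolding approx_net_def
    by (rule elementary_tensor_in_ptensor[where u = "approx_op i x" and v = a0]) simp
  show "approx_net i (x + y) T = approx_net i x T + approx_net i y T" if "T \<in> bbil cs" for x y T
    unfolding approx_net_def finite_rank_ops_add_apply[OF G] by (rule bbil_add_left[OF that])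
  show "approx_net i (cs c x) T = c * approx_net i x T" if "T \<in> bbil cs" for c x T
    unfolding approx_net_def finite_rank_ops_cs_apply[OF G] by (rule bbil_cs_left[OF that])
  obtain K where K: "\<And>x. norm (approx_op i x) \<le> K * norm x"
    using finite_rank_ops_bounded[OF G] by blast
  have "ptnorm cs (approx_net i x) \<le> (K * norm a0) * norm x" for x
  proof -
    have "ptnorm cs (approx_net i x) \<le> norm (approx_op i x) * norm a0"
      unfolding approx_net_def
      by (rule ptnorm_elementary_tensor_le[where u = "approx_op i x" and v = a0]) simp
    also have "\<dots> \<le> (K * norm x) * norm a0" using K[of x] by (rule mult_right_mono) simp
    finally show ?thesis by (simp add: algebra_simps)
  qed
  then show "\<exists>C. \<forall>x. ptnorm cs (approx_net i x) \<le> C * norm x" by blast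
qed

lemma approx_net_left_module:
  "((\<lambda>i. ptnorm cs (\<lambda>T. lact a (approx_net i x) T - approx_net i (a * x) T)) \<longlongrightarrow> 0) approx_net_filter"
proof (rule Lim_null_comparison)
  have "\<forall>T\<in>bbil cs. lact a (approx_net i x) T - approx_net i (a * x) T
      = T (a * approx_op i x - approx_op i (a * x)) a0" for i
    unfolding approx_net_def lact_def by (simp add: bbil_diff_left)
  note tensor = elementary_tensor[OF this]
  show "eventually (\<lambda>i. norm (ptnorm cs (\<lambda>T. lact a (approx_net i x) T - approx_net i (a * x) T))
      \<le> norm (a * approx_op i x - approx_op i (a * x)) * norm a0) approx_net_filter"
    using tensor(2,3) by simp
  show "((\<lambda>i. norm (a * approx_op i x - approx_op i (a * x)) * norm a0) \<longlongrightarrow> 0) approx_net_filter"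
    by (rule tendsto_mult_left_zero[OF tendsto_approx_op_left_defect])
qed

lemma approx_net_right_character:
  "((\<lambda>i. ptnorm cs (\<lambda>T. approx_net i (x * a) T - \<phi> a * approx_net i x T)) \<longlongrightarrow> 0) approx_net_filter"
proof (rule Lim_null_comparison)
  have "\<forall>T\<in>bbil cs. approx_net i (x * a) T - \<phi> a * approx_net i x T
      = T (approx_op i (x * a) - cs (\<phi> a) (approx_op i x)) a0" for i
    unfolding approx_net_def by (simp add: bbil_diff_left bbil_cs_left)
  note tensor = elementary_tensor[OF this]
  show "eventually (\<lambda>i. norm (ptnorm cs (\<lambda>T. approx_net i (x * a) T - \<phi> a * approx_net i x T))
      \<le> norm (approx_op i (x * a) - cs (\<phi> a) (approx_op i x)) * norm a0) approx_net_filter"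
    using tensor(2,3) by simp
  show "((\<lambda>i. norm (approx_op i (x * a) - cs (\<phi> a) (approx_op i x)) * norm a0) \<longlongrightarrow> 0)
      approx_net_filter"
    by (rule tendsto_mult_left_zero[OF tendsto_approx_op_right_defect])
qed

lemma approx_net_phi: "((\<lambda>i. approx_net i x (\<lambda>u v. \<phi> (u * v)) - \<phi> x) \<longlongrightarrow> 0) approx_net_filter"
  unfolding approx_net_def phi_mult phi_a0 using LIM_zero[OF tendsto_phi_approx_op] by simp

theorem approx_left_phi_biproj_net_approx_net:
  "approx_left_phi_biproj_net cs \<phi> approx_net_filter approx_net"
  unfolding approx_left_phi_biproj_net_def
  using approx_net_filter_neq_bot approx_net_bounded_linear approx_net_left_module
    approx_net_right_character approx_net_phi by blast

end

lemma phi_biflat_data_exists: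
  assumes "cplx_banach_alg cs" and "character cs \<phi>" and "phi_biflat cs \<phi>"
  obtains \<rho> a0 where "phi_biflat_data cs \<phi> \<rho> a0"
proof -
  interpret complex_banach_algebra cs by (rule complex_banach_algebra.intro) (rule assms(1))
  obtain \<rho> where \<rho>: "\<forall>a. bidual_elem cs (\<rho> a)"
     "\<forall>a b. \<forall>T\<in>bbil cs. \<rho> (a + b) T = \<rho> a T + \<rho> b T"
     "\<forall>c a. \<forall>T\<in>bbil cs. \<rho> (cs c a) T = c * \<rho> a T"
     "\<forall>a b. \<forall>T\<in>bbil cs. \<rho> (a * b) T = lact a (\<rho> b) T"
     "\<forall>a b. \<forall>T\<in>bbil cs. \<rho> (a * b) T = ract (\<rho> a) b T"
     "\<forall>a. \<rho> a (\<lambda>x y. \<phi> (x * y)) = \<phi> a"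
    using assms(3) unfolding phi_biflat_def by blast
  obtain x0 where "\<phi> x0 \<noteq> 0" using assms(2) unfolding character_def by blast
  then have "\<phi> (cs (1 / \<phi> x0) x0) = 1"
    using assms(2) by (simp add: character_def clinear_fun_cs)
  then have "phi_biflat_data cs \<phi> \<rho> (cs (1 / \<phi> x0) x0)"
    by unfold_locales (use assms(2) \<rho> in auto)
  then show ?thesis by (rule that)
qed

theorem theorem2p6:
  fixes cs :: "complex \<Rightarrow> 'a::{real_normed_algebra,banach} \<Rightarrow> 'a"
    and \<phi> :: "'a \<Rightarrow> complex"
  assumes "cplx_banach_alg cs"
    and "character cs \<phi>"
    and "phi_biflat cs \<phi>"
  shows "approx_left_phi_biprojective cs \<phi>"
proof -
  obtain \<rho> a0 where "phi_biflat_data cs \<phi> \<rho> a0"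
    using phi_biflat_data_exists[OF assms] .
  then interpret phi_biflat_data cs \<phi> \<rho> a0 .
  show ?thesis
    unfolding approx_left_phi_biprojective_def using approx_left_phi_biproj_net_approx_net by blast
qed

end
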